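(* Let $(\mathcal{M},g)$ be a pseudo-Riemannian manifold of dimension $D\ge3$ whose Weyl endomorphism is not invertible. Suppose there is a smooth function $\Omega>0$ such that $\tilde g_{ab}=\Omega^{-2}g_{ab}$ is an Einstein metric. Then $$C_{be}{}^{qp}(W^+)_{qp}{}^{rs}\,\nabla_{[r}L_{s]a}=\nabla_{[b}L_{e]a}.$$
   Context: Conventions. - Abstract index notation is used, with indices raised and lowered by $g$. - $\nabla$ is the Levi-Civita connection of $g$. - Curvature: $\nabla_a\nabla_b\omega_c-\nabla_b\nabla_a\omega_c=R_{abc}{}^d\omega_d$, $R_{ac}=R_{abc}{}^b$, $R=g^{ab}R_{ab}$. - Schouten tensor: $L_{ab}=\frac{R_{ab}}{D-2}-\frac{g_{ab}R}{2(D-1)(D-2)}$. - Weyl tensor: $C_{abc}{}^d=R_{abc}{}^d-2L_{[b}{}^dg_{a]c}-2\delta_{[b}{}^dL_{a]c}$. Weyl endomorphism and pseudo-inverse. - The Weyl endomorphism is $C^{ac}{}_{be}$, regarded as the linear map $\psi^{be}\mapsto C^{ac}{}_{be}\psi^{be}$ on bivectors. - The Moore–Penrose pseudo-inverse of a real matrix $A$ is the unique $A^+$ with $AA^+A=A$, $A^+AA^+=A^+$, $(AA^+)^T=AA^+$ and $(A^+A)^T=A^+A$. - $(W^+)_{ab}{}^{cd}$ denotes the tensor, antisymmetric in each index pair, representing the Moore–Penrose pseudo-inverse of the Weyl endomorphism. Other index positions are obtained with $g$. *)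

theory Defs
  imports "HOL-Analysis.Analysis"
begin

text \<open>A pseudo-Riemannian metric on an open set U of
  real^'n (coordinates indexed by the finite type 'n, so D = CARD('n)) is a smooth
  field of symmetric invertible matrices. All tensors are given by their components
  in the coordinate basis; abstract indices become explicit sums over UNIV.\<close>

definition pd :: "'n::finite \<Rightarrow> (real^'n \<Rightarrow> 'a::real_normed_vector) \<Rightarrow> real^'n \<Rightarrow> 'a" where
  "pd i f x = vector_derivative (\<lambda>t. f (x + t *\<^sub>R axis i 1)) (at 0)"

fun iter_pd :: "'n::finite list \<Rightarrow> (real^'n \<Rightarrow> 'a::real_normed_vector) \<Rightarrow> real^'n \<Rightarrow> 'a" where
  "iter_pd [] f = f"
| "iter_pd (i # is) f = pd i (iter_pd is f)"

definition smooth_on :: "(real^'n::finite) set \<Rightarrow> (real^'n \<Rightarrow> 'a::real_normed_vector) \<Rightarrow> bool" where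
  "smooth_on U f \<longleftrightarrow> (\<forall>is. \<forall>x\<in>U. iter_pd is f differentiable (at x))"

definition metric_on :: "(real^'n::finite) set \<Rightarrow> (real^'n \<Rightarrow> real^'n^'n) \<Rightarrow> bool" where
  "metric_on U g \<longleftrightarrow> open U \<and> smooth_on U g \<and>
     (\<forall>x\<in>U. transpose (g x) = g x \<and> det (g x) \<noteq> 0)"

definition ginv :: "(real^'n::finite \<Rightarrow> real^'n^'n) \<Rightarrow> real^'n \<Rightarrow> real^'n^'n" where
  "ginv G x = matrix_inv (G x)"

definition christoffel :: "(real^'n::finite \<Rightarrow> real^'n^'n) \<Rightarrow> real^'n \<Rightarrow> 'n \<Rightarrow> 'n \<Rightarrow> 'n \<Rightarrow> real" where
  "christoffel G x c a b = (1/2) * (\<Sum>d\<in>UNIV. ginv G x $ c $ d *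
      (pd a (\<lambda>y. G y $ d $ b) x + pd b (\<lambda>y. G y $ d $ a) x - pd d (\<lambda>y. G y $ a $ b) x))"

text \<open>R_{abc}^d with the convention nabla_a nabla_b w_c - nabla_b nabla_a w_c = R_{abc}^d w_d.\<close>
definition riem :: "(real^'n::finite \<Rightarrow> real^'n^'n) \<Rightarrow> real^'n \<Rightarrow> 'n \<Rightarrow> 'n \<Rightarrow> 'n \<Rightarrow> 'n \<Rightarrow> real" where
  "riem G x a b c d =
     pd b (\<lambda>y. christoffel G y d a c) x - pd a (\<lambda>y. christoffel G y d b c) x
     + (\<Sum>e\<in>UNIV. christoffel G x d b e * christoffel G x e a c
                 - christoffel G x d a e * christoffel G x e b c)"

definition ricci :: "(real^'n::finite \<Rightarrow> real^'n^'n) \<Rightarrow> real^'n \<Rightarrow> 'n \<Rightarrow> 'n \<Rightarrow> real" where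
  "ricci G x a c = (\<Sum>b\<in>UNIV. riem G x a b c b)"

definition scal :: "(real^'n::finite \<Rightarrow> real^'n^'n) \<Rightarrow> real^'n \<Rightarrow> real" where
  "scal G x = (\<Sum>a\<in>UNIV. \<Sum>c\<in>UNIV. ginv G x $ a $ c * ricci G x a c)"

definition schouten :: "(real^'n::finite \<Rightarrow> real^'n^'n) \<Rightarrow> real^'n \<Rightarrow> 'n \<Rightarrow> 'n \<Rightarrow> real" where
  "schouten G x a b = ricci G x a b / (real CARD('n) - 2)
     - G x $ a $ b * scal G x / (2 * (real CARD('n) - 1) * (real CARD('n) - 2))"

definition schouten_mixed :: "(real^'n::finite \<Rightarrow> real^'n^'n) \<Rightarrow> real^'n \<Rightarrow> 'n \<Rightarrow> 'n \<Rightarrow> real" where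
  "schouten_mixed G x b d = (\<Sum>e\<in>UNIV. schouten G x b e * ginv G x $ e $ d)"

definition weyl :: "(real^'n::finite \<Rightarrow> real^'n^'n) \<Rightarrow> real^'n \<Rightarrow> 'n \<Rightarrow> 'n \<Rightarrow> 'n \<Rightarrow> 'n \<Rightarrow> real" where
  "weyl G x a b c d = riem G x a b c d
     - (schouten_mixed G x b d * G x $ a $ c - schouten_mixed G x a d * G x $ b $ c)
     - ((if b = d then 1 else 0) * schouten G x a c - (if a = d then 1 else 0) * schouten G x b c)"

definition weyl_uudd :: "(real^'n::finite \<Rightarrow> real^'n^'n) \<Rightarrow> real^'n \<Rightarrow> 'n \<Rightarrow> 'n \<Rightarrow> 'n \<Rightarrow> 'n \<Rightarrow> real" where
  "weyl_uudd G x a c b e = (\<Sum>p\<in>UNIV. \<Sum>q\<in>UNIV. \<Sum>d\<in>UNIV.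
       ginv G x $ a $ p * ginv G x $ c $ q * weyl G x p q b d * G x $ d $ e)"

text \<open>The Weyl endomorphism psi^{be} |-> C^{ac}_{be} psi^{be}, as a real matrix acting on
  component arrays psi indexed by pairs of coordinate indices.\<close>
definition weyl_endo :: "(real^'n::finite \<Rightarrow> real^'n^'n) \<Rightarrow> real^'n \<Rightarrow> real^('n \<times> 'n)^('n \<times> 'n)" where
  "weyl_endo G x = (\<chi> ac. \<chi> be. weyl_uudd G x (fst ac) (snd ac) (fst be) (snd be))"

definition bivectors :: "(real^('n::finite \<times> 'n)) set" where
  "bivectors = {\<psi>. \<forall>i j. \<psi> $ (i, j) = - \<psi> $ (j, i)}"

definition weyl_invertible :: "(real^'n::finite \<Rightarrow> real^'n^'n) \<Rightarrow> real^'n \<Rightarrow> bool" where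
  "weyl_invertible G x \<longleftrightarrow> bij_betw (\<lambda>\<psi>. weyl_endo G x *v \<psi>) bivectors bivectors"

definition is_MP_inverse :: "real^'n::finite^'m::finite \<Rightarrow> real^'m^'n \<Rightarrow> bool" where
  "is_MP_inverse A B \<longleftrightarrow> A ** B ** A = A \<and> B ** A ** B = B \<and>
     transpose (A ** B) = A ** B \<and> transpose (B ** A) = B ** A"

definition MP_inverse :: "real^'n::finite^'m::finite \<Rightarrow> real^'m^'n" where
  "MP_inverse A = (THE B. is_MP_inverse A B)"

text \<open>(W^+)^{be}_{ac} is the entry (be),(ac) of the pseudo-inverse matrix;
  (W^+)_{qp}^{rs} = g_{qm} g_{pn} (W^+)^{mn}_{uv} g^{ur} g^{vs}.\<close>
definition pinv_dduu :: "(real^'n::finite \<Rightarrow> real^'n^'n) \<Rightarrow> real^'n \<Rightarrow> 'n \<Rightarrow> 'n \<Rightarrow> 'n \<Rightarrow> 'n \<Rightarrow> real" where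
  "pinv_dduu G x q p r s = (\<Sum>m\<in>UNIV. \<Sum>n\<in>UNIV. \<Sum>u\<in>UNIV. \<Sum>v\<in>UNIV.
      G x $ q $ m * G x $ p $ n * MP_inverse (weyl_endo G x) $ (m, n) $ (u, v)
      * ginv G x $ u $ r * ginv G x $ v $ s)"

definition weyl_dduu :: "(real^'n::finite \<Rightarrow> real^'n^'n) \<Rightarrow> real^'n \<Rightarrow> 'n \<Rightarrow> 'n \<Rightarrow> 'n \<Rightarrow> 'n \<Rightarrow> real" where
  "weyl_dduu G x b e q p = (\<Sum>m\<in>UNIV. \<Sum>n\<in>UNIV. \<Sum>u\<in>UNIV. \<Sum>v\<in>UNIV.
      G x $ b $ m * G x $ e $ n * weyl_uudd G x m n u v * ginv G x $ u $ q * ginv G x $ v $ p)"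

definition nabla_schouten :: "(real^'n::finite \<Rightarrow> real^'n^'n) \<Rightarrow> real^'n \<Rightarrow> 'n \<Rightarrow> 'n \<Rightarrow> 'n \<Rightarrow> real" where
  "nabla_schouten G x r s a = pd r (\<lambda>y. schouten G y s a) x
     - (\<Sum>k\<in>UNIV. christoffel G x k r s * schouten G x k a + christoffel G x k r a * schouten G x s k)"

definition alt_nabla_schouten :: "(real^'n::finite \<Rightarrow> real^'n^'n) \<Rightarrow> real^'n \<Rightarrow> 'n \<Rightarrow> 'n \<Rightarrow> 'n \<Rightarrow> real" where
  "alt_nabla_schouten G x r s a = (nabla_schouten G x r s a - nabla_schouten G x s r a) / 2"

definition einstein_on :: "(real^'n::finite) set \<Rightarrow> (real^'n \<Rightarrow> real^'n^'n) \<Rightarrow> bool" where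
  "einstein_on U G \<longleftrightarrow> (\<exists>lam::real. \<forall>x\<in>U. \<forall>a b. ricci G x a b = lam * G x $ a $ b)"

end

theory Submission
  imports Defs
begin

text \<open>Write \<open>g\<^sub>E = \<Omega>\<^sup>-\<^sup>2 g\<close> and \<open>u = d log \<Omega>\<^sup>-\<^sup>1\<close>. The Christoffel symbols change by
  \<open>K\<^sup>d\<^sub>a\<^sub>c = \<delta>\<^sup>d\<^sub>a u\<^sub>c + \<delta>\<^sup>d\<^sub>c u\<^sub>a - g\<^sub>a\<^sub>c u\<^sup>d\<close>; computing the Ricci tensor of \<open>g\<^sub>E\<close> and imposing the
  Einstein condition expresses the Schouten tensor of \<open>g\<close> through \<open>u\<close> alone:
  \<open>L\<^sub>s\<^sub>a = \<nabla>\<^sub>s u\<^sub>a - u\<^sub>s u\<^sub>a + (|u|\<^sup>2/2 + c \<Omega>\<^sup>-\<^sup>2) g\<^sub>s\<^sub>a\<close> with \<open>c = \<lambda>/(2(D - 1))\<close> for the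
  Einstein constant \<open>\<lambda>\<close>. Differentiating once more and
  antisymmetrising, the third derivatives of \<open>\<Omega>\<close> cancel by the symmetry of partial
  derivatives and the Ricci identity leaves \<open>\<nabla>\<^sub>[\<^sub>r L\<^sub>s\<^sub>]\<^sub>a = C\<^sub>r\<^sub>s\<^sub>a\<^sup>d u\<^sub>d / 2\<close>.
  Hence, for each \<open>a\<close>, the array \<open>\<nabla>\<^sub>[\<^sub>r L\<^sub>s\<^sub>]\<^sub>a\<close> lies in the image of the Weyl endomorphism
  (after moving indices with \<open>g\<close>), and \<open>C W\<^sup>+\<close> acts as the identity on that image because
  \<open>C W\<^sup>+ C = C\<close>.\<close>

lemma pd_eq_derivative:
  assumes "(f has_derivative f') (at x)"
  shows "pd i f x = f' (axis i 1)"
proof -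
  have "((\<lambda>t::real. x + t *\<^sub>R axis i 1) has_derivative (\<lambda>t. t *\<^sub>R axis i 1)) (at 0)"
    by (auto intro!: derivative_eq_intros)
  from has_derivative_compose[OF this] assms
  have "((\<lambda>t. f (x + t *\<^sub>R axis i 1)) has_derivative (\<lambda>t. f' (t *\<^sub>R axis i 1))) (at 0)"
    by simp
  hence "((\<lambda>t. f (x + t *\<^sub>R axis i 1)) has_vector_derivative f' (axis i 1)) (at 0)"
    unfolding has_vector_derivative_def
    using linear_scale[OF has_derivative_linear[OF assms]] by simp
  thus ?thesis unfolding pd_def by (rule vector_derivative_at)
qed

lemma pd_cong_open:
  assumes "open U" "x \<in> U" "\<And>y. y \<in> U \<Longrightarrow> f y = h y"
  shows "pd i f x = pd i h x"
proof -
  let ?l = "\<lambda>t::real. x + t *\<^sub>R axis i 1"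
  have "open (?l -` U)"
    by (rule open_vimage[OF assms(1)]) (auto intro!: continuous_intros)
  moreover have "0 \<in> ?l -` U" using assms(2) by simp
  ultimately have "\<forall>\<^sub>F t in nhds 0. ?l t \<in> U"
    using eventually_nhds by blast
  hence "\<forall>\<^sub>F t in nhds 0. t \<in> UNIV \<longrightarrow> f (?l t) = h (?l t)"
    by eventually_elim (simp add: assms(3))
  hence "vector_derivative (\<lambda>t. f (?l t)) (at 0 within UNIV)
      = vector_derivative (\<lambda>t. h (?l t)) (at 0 within UNIV)"
    by (intro vector_derivative_cong_eq) auto
  thus ?thesis unfolding pd_def by simp
qed

lemma differentiable_cong_open:
  assumes "open U" "x \<in> U" "\<And>y. y \<in> U \<Longrightarrow> f y = h y" "f differentiable (at x)"
  shows "h differentiable (at x)"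
  using assms has_derivative_transform_within_open unfolding differentiable_def by metis

lemma pd_add:
  assumes "f differentiable (at x)" "h differentiable (at x)"
  shows "pd i (\<lambda>y. f y + h y) x = pd i f x + pd i h x"
proof -
  obtain F H where F: "(f has_derivative F) (at x)" and H: "(h has_derivative H) (at x)"
    using assms unfolding differentiable_def by blast
  show ?thesis
    using pd_eq_derivative[OF F] pd_eq_derivative[OF H] pd_eq_derivative[OF has_derivative_add[OF F H]]
    by simp
qed

lemma pd_diff:
  assumes "f differentiable (at x)" "h differentiable (at x)"
  shows "pd i (\<lambda>y. f y - h y) x = pd i f x - pd i h x"
proof -
  obtain F H where F: "(f has_derivative F) (at x)" and H: "(h has_derivative H) (at x)"
    using assms unfolding differentiable_def by blast
  show ?thesis
    using pd_eq_derivative[OF F] pd_eq_derivative[OF H] pd_eq_derivative[OF has_derivative_diff[OF F H]]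
    by simp
qed

lemma pd_minus:
  assumes "f differentiable (at x)"
  shows "pd i (\<lambda>y. - f y) x = - pd i f x"
proof -
  obtain F where F: "(f has_derivative F) (at x)"
    using assms unfolding differentiable_def by blast
  show ?thesis using pd_eq_derivative[OF F] pd_eq_derivative[OF has_derivative_minus[OF F]] by simp
qed

lemma pd_const: "pd i (\<lambda>y. c) x = 0"
proof -
  have "pd i (\<lambda>y. c) x = (\<lambda>v. 0) (axis i 1)" by (rule pd_eq_derivative) (rule has_derivative_const)
  thus ?thesis by simp
qed

lemma pd_mult:
  fixes f h :: "real^'n::finite \<Rightarrow> real"
  assumes "f differentiable (at x)" "h differentiable (at x)"
  shows "pd i (\<lambda>y. f y * h y) x = pd i f x * h x + f x * pd i h x"
proof -
  obtain F H where F: "(f has_derivative F) (at x)" and H: "(h has_derivative H) (at x)"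
    using assms unfolding differentiable_def by blast
  show ?thesis
    using pd_eq_derivative[OF F] pd_eq_derivative[OF H] pd_eq_derivative[OF has_derivative_mult[OF F H]]
    by simp
qed

lemma pd_divide_const:
  fixes f :: "real^'n::finite \<Rightarrow> real"
  assumes "f differentiable (at x)"
  shows "pd i (\<lambda>y. f y / c) x = pd i f x / c"
  using pd_mult[OF assms, of "\<lambda>y. inverse c" i] by (simp add: pd_const divide_inverse)

lemma pd_inverse:
  fixes f :: "real^'n::finite \<Rightarrow> real"
  assumes "f differentiable (at x)" "f x \<noteq> 0"
  shows "pd i (\<lambda>y. inverse (f y)) x = - pd i f x / (f x)\<^sup>2"
proof -
  obtain F where F: "(f has_derivative F) (at x)"
    using assms unfolding differentiable_def by blast
  show ?thesis
    using pd_eq_derivative[OF F] pd_eq_derivative[OF Deriv.has_derivative_inverse[OF assms(2) F]]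
    by (simp add: power2_eq_square field_simps)
qed

lemma pd_sum:
  assumes "finite I" "\<And>k. k \<in> I \<Longrightarrow> f k differentiable (at x)"
  shows "pd i (\<lambda>y. \<Sum>k\<in>I. f k y) x = (\<Sum>k\<in>I. pd i (f k) x)"
proof -
  have D: "(f k has_derivative frechet_derivative (f k) (at x)) (at x)" if "k \<in> I" for k
    using assms(2)[OF that] frechet_derivative_works by blast
  have "pd i (\<lambda>y. \<Sum>k\<in>I. f k y) x = (\<Sum>k\<in>I. frechet_derivative (f k) (at x) (axis i 1))"
    using D by (intro pd_eq_derivative has_derivative_sum) auto
  also have "\<dots> = (\<Sum>k\<in>I. pd i (f k) x)"
    by (intro sum.cong refl) (simp add: pd_eq_derivative[OF D])
  finally show ?thesis .
qed

lemma has_derivative_vec_nth: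
  fixes f :: "real^'n::finite \<Rightarrow> 'a::real_normed_vector^'m::finite"
  assumes "(f has_derivative F) (at x)"
  shows "((\<lambda>y. f y $ a) has_derivative (\<lambda>v. F v $ a)) (at x)"
  using bounded_linear.has_derivative[OF bounded_linear_vec_nth assms] .

lemma differentiable_vec_nth:
  fixes f :: "real^'n::finite \<Rightarrow> 'a::real_normed_vector^'m::finite"
  assumes "f differentiable (at x)"
  shows "(\<lambda>y. f y $ a) differentiable (at x)"
  using assms has_derivative_vec_nth unfolding differentiable_def by blast

lemma pd_vec_nth:
  fixes f :: "real^'n::finite \<Rightarrow> 'a::real_normed_vector^'m::finite"
  assumes "f differentiable (at x)"
  shows "pd i (\<lambda>y. f y $ a) x = pd i f x $ a"
proof -
  obtain F where F: "(f has_derivative F) (at x)"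
    using assms unfolding differentiable_def by blast
  show ?thesis using pd_eq_derivative[OF has_derivative_vec_nth[OF F]] pd_eq_derivative[OF F] by simp
qed

lemma smooth_on_differentiable: "smooth_on U f \<Longrightarrow> y \<in> U \<Longrightarrow> iter_pd is f differentiable (at y)"
  unfolding smooth_on_def by blast

lemma iter_pd_append: "iter_pd (is @ [i]) f = iter_pd is (pd i f)"
  by (induction "is") auto

lemma smooth_on_pd: "smooth_on U f \<Longrightarrow> smooth_on U (pd i f)"
  unfolding smooth_on_def by (metis iter_pd_append)

lemma iter_pd_vec_nth:
  fixes f :: "real^'n::finite \<Rightarrow> 'a::real_normed_vector^'m::finite"
  assumes "open U" "smooth_on U f" "y \<in> U"
  shows "iter_pd is (\<lambda>y. f y $ a) y = iter_pd is f y $ a"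
  using assms(3)
proof (induction "is" arbitrary: y)
  case (Cons i "is")
  have "iter_pd (i # is) (\<lambda>y. f y $ a) y = pd i (\<lambda>z. iter_pd is f z $ a) y"
    using pd_cong_open[OF assms(1) Cons.prems, of "iter_pd is (\<lambda>y. f y $ a)"] Cons.IH by simp
  also have "\<dots> = iter_pd (i # is) f y $ a"
    using pd_vec_nth[OF smooth_on_differentiable[OF assms(2) Cons.prems]] by simp
  finally show ?case .
qed simp

lemma smooth_on_vec_nth:
  fixes f :: "real^'n::finite \<Rightarrow> 'a::real_normed_vector^'m::finite"
  assumes "open U" "smooth_on U f"
  shows "smooth_on U (\<lambda>y. f y $ a)"
  unfolding smooth_on_def
proof (intro allI ballI)
  fix "is" y assume y: "y \<in> U"
  have d: "(\<lambda>z. iter_pd is f z $ a) differentiable (at y)"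
    using differentiable_vec_nth smooth_on_differentiable[OF assms(2) y] by blast
  have eq: "iter_pd is f z $ a = iter_pd is (\<lambda>y. f y $ a) z" if "z \<in> U" for z
    using iter_pd_vec_nth[OF assms that] by simp
  show "iter_pd is (\<lambda>y. f y $ a) differentiable (at y)"
    by (rule differentiable_cong_open[OF assms(1) y eq d])
qed

lemmas differentiable_rules = differentiable_add differentiable_diff differentiable_mult
  differentiable_minus differentiable_const differentiable_inverse

lemma has_real_derivative_pd_line:
  fixes f :: "real^'n::finite \<Rightarrow> real"
  assumes "f differentiable (at (y + s *\<^sub>R axis i 1))"
  shows "((\<lambda>t. f (y + t *\<^sub>R axis i 1)) has_real_derivative pd i f (y + s *\<^sub>R axis i 1)) (at s)"
proof -
  obtain F where F: "(f has_derivative F) (at (y + s *\<^sub>R axis i 1))"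
    using assms unfolding differentiable_def by blast
  have "((\<lambda>t::real. y + t *\<^sub>R axis i 1) has_derivative (\<lambda>t. t *\<^sub>R axis i 1)) (at s)"
    by (auto intro!: derivative_eq_intros)
  hence "((\<lambda>t. f (y + t *\<^sub>R axis i 1)) has_derivative (\<lambda>t. F (t *\<^sub>R axis i 1))) (at s)"
    using has_derivative_compose F by blast
  moreover have "(\<lambda>t. F (t *\<^sub>R axis i 1)) = (*) (F (axis i 1))"
    using linear_scale[OF has_derivative_linear[OF F]] by (auto simp: mult.commute)
  ultimately show ?thesis
    unfolding has_field_derivative_def pd_eq_derivative[OF F] by simp
qed

definition second_difference :: "(real^'n::finite \<Rightarrow> real) \<Rightarrow> real^'n \<Rightarrow> 'n \<Rightarrow> 'n \<Rightarrow> real \<Rightarrow> real" where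
  "second_difference f x i j h =
     f (x + h *\<^sub>R axis i 1 + h *\<^sub>R axis j 1) - f (x + h *\<^sub>R axis j 1) - f (x + h *\<^sub>R axis i 1) + f x"

lemma second_difference_commute: "second_difference f x i j h = second_difference f x j i h"
  unfolding second_difference_def by (simp add: algebra_simps)

lemma dist_add_two_axes:
  assumes "0 \<le> s" "s \<le> h" "0 \<le> t" "t \<le> h"
  shows "dist (x + s *\<^sub>R axis i 1 + t *\<^sub>R axis j 1) (x :: real^'n::finite) \<le> 2 * h"
proof -
  have "dist (x + s *\<^sub>R axis i 1 + t *\<^sub>R axis j 1) x = norm (s *\<^sub>R axis i 1 + t *\<^sub>R axis j (1::real))"
    by (simp add: dist_norm)
  also have "\<dots> \<le> norm (s *\<^sub>R axis i (1::real)) + norm (t *\<^sub>R axis j (1::real))"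
    by (rule norm_triangle_ineq)
  also have "\<dots> = s + t" using assms by simp
  finally show ?thesis using assms by simp
qed

lemma second_difference_mean_value:
  fixes f :: "real^'n::finite \<Rightarrow> real"
  assumes sm: "smooth_on U f" and sub: "cball x (2 * h) \<subseteq> U" and h: "0 < h"
  shows "\<exists>p. dist p x \<le> 2 * h \<and> second_difference f x i j h = h\<^sup>2 * pd j (pd i f) p"
proof -
  define e1 :: "real^'n" where "e1 = axis i 1"
  define e2 :: "real^'n" where "e2 = axis j 1"
  have inU: "x + s *\<^sub>R e1 + t *\<^sub>R e2 \<in> U" if "0 \<le> s" "s \<le> h" "0 \<le> t" "t \<le> h" for s t
  proof -
    have "x + s *\<^sub>R e1 + t *\<^sub>R e2 \<in> cball x (2 * h)"
      using dist_add_two_axes[OF that, of x i j] by (simp add: dist_commute e1_def e2_def)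
    thus ?thesis using sub by blast
  qed
  define \<phi> where "\<phi> s = f ((x + h *\<^sub>R e2) + s *\<^sub>R e1) - f (x + s *\<^sub>R e1)" for s
  define \<phi>' where "\<phi>' s = pd i f ((x + h *\<^sub>R e2) + s *\<^sub>R e1) - pd i f (x + s *\<^sub>R e1)" for s
  have "(\<phi> has_real_derivative \<phi>' s) (at s)" if "0 \<le> s" "s \<le> h" for s
    unfolding \<phi>_def \<phi>'_def e1_def
    using inU[OF that, of h] inU[OF that, of 0] h smooth_on_differentiable[OF sm, of _ "[]"]
    by (intro DERIV_diff has_real_derivative_pd_line) (auto simp: algebra_simps e1_def)
  then obtain \<xi> where \<xi>: "0 < \<xi>" "\<xi> < h" "\<phi> h - \<phi> 0 = h * \<phi>' \<xi>"
    using MVT2[of 0 h \<phi> \<phi>'] h by auto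
  define \<psi> where "\<psi> t = pd i f ((x + \<xi> *\<^sub>R e1) + t *\<^sub>R e2)" for t
  have "(\<psi> has_real_derivative pd j (pd i f) ((x + \<xi> *\<^sub>R e1) + t *\<^sub>R e2)) (at t)"
    if "0 \<le> t" "t \<le> h" for t
    unfolding \<psi>_def e2_def
    using inU[of \<xi> t] \<xi> that smooth_on_differentiable[OF sm, of _ "[i]"]
    by (intro has_real_derivative_pd_line) (auto simp: e2_def)
  then obtain \<eta> where \<eta>: "0 < \<eta>" "\<eta> < h"
    "\<psi> h - \<psi> 0 = h * pd j (pd i f) ((x + \<xi> *\<^sub>R e1) + \<eta> *\<^sub>R e2)"
    using MVT2[of 0 h \<psi> "\<lambda>t. pd j (pd i f) ((x + \<xi> *\<^sub>R e1) + t *\<^sub>R e2)"] h by auto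
  have "second_difference f x i j h = \<phi> h - \<phi> 0"
    unfolding second_difference_def \<phi>_def e1_def e2_def by (simp add: algebra_simps)
  also have "\<dots> = h\<^sup>2 * pd j (pd i f) ((x + \<xi> *\<^sub>R e1) + \<eta> *\<^sub>R e2)"
    using \<xi>(3) \<eta>(3) unfolding \<phi>'_def \<psi>_def by (simp add: algebra_simps power2_eq_square)
  finally show ?thesis
    using dist_add_two_axes[of \<xi> h \<eta> x i j] \<xi> \<eta> unfolding e1_def e2_def by auto
qed

lemma second_difference_tendsto:
  fixes f :: "real^'n::finite \<Rightarrow> real"
  assumes "open U" "x \<in> U" "smooth_on U f"
  shows "((\<lambda>h. second_difference f x i j h / h\<^sup>2) \<longlongrightarrow> pd j (pd i f) x) (at_right 0)"
proof -
  obtain r where r: "r > 0" "cball x r \<subseteq> U" using assms(1,2) open_contains_cball by blast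
  define p where "p h = (SOME p. dist p x \<le> 2 * h \<and> second_difference f x i j h = h\<^sup>2 * pd j (pd i f) p)"
    for h
  have p: "dist (p h) x \<le> 2 * h \<and> second_difference f x i j h = h\<^sup>2 * pd j (pd i f) (p h)"
    if "0 < h" "h < r / 2" for h
    unfolding p_def using that r
    by (intro someI_ex[OF second_difference_mean_value[OF assms(3)]]) (auto simp: subset_eq)
  have ev: "\<forall>\<^sub>F h in at_right 0. 0 < h \<and> h < r / 2"
    using r(1) by (auto simp: eventually_at_right_field intro!: exI[of _ "r / 2"])
  have "(p \<longlongrightarrow> x) (at_right 0)"
  proof (rule tendsto_sandwich[of "\<lambda>_. 0" _ _ "\<lambda>h. 2 * h", THEN tendsto_dist_iff[THEN iffD2]])
    show "\<forall>\<^sub>F h in at_right 0. 0 \<le> dist (p h) x" by simp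
    show "\<forall>\<^sub>F h in at_right 0. dist (p h) x \<le> 2 * h"
      using ev by eventually_elim (use p in blast)
    show "((\<lambda>h::real. 2 * h) \<longlongrightarrow> 0) (at_right 0)"
      by (rule tendsto_mult_right_zero) (simp add: tendsto_ident_at)
  qed simp
  moreover have "isCont (pd j (pd i f)) x"
    using differentiable_imp_continuous_within smooth_on_differentiable[OF assms(3,2), of "[j, i]"] by simp
  ultimately have "((\<lambda>h. pd j (pd i f) (p h)) \<longlongrightarrow> pd j (pd i f) x) (at_right 0)"
    using isCont_tendsto_compose by blast
  moreover have "\<forall>\<^sub>F h in at_right 0. pd j (pd i f) (p h) = second_difference f x i j h / h\<^sup>2"
    using ev by eventually_elim (use p in auto)
  ultimately show ?thesis by (rule Lim_transform_eventually)
qed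

lemma pd_commute:
  fixes f :: "real^'n::finite \<Rightarrow> real"
  assumes "open U" "x \<in> U" "smooth_on U f"
  shows "pd i (pd j f) x = pd j (pd i f) x"
proof -
  have "((\<lambda>h. second_difference f x j i h / h\<^sup>2) \<longlongrightarrow> pd j (pd i f) x) (at_right 0)"
    using second_difference_tendsto[OF assms, of i j] by (simp add: second_difference_commute)
  from tendsto_unique[OF _ second_difference_tendsto[OF assms, of j i] this] show ?thesis by simp
qed

definition orth_proj :: "'a::euclidean_space set \<Rightarrow> 'a \<Rightarrow> 'a" where
  "orth_proj S x = (SOME y. y \<in> span S \<and> (\<forall>w\<in>span S. (x - y) \<bullet> w = 0))"

lemma orth_proj_spec: "orth_proj S x \<in> span S \<and> (\<forall>w\<in>span S. (x - orth_proj S x) \<bullet> w = 0)"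
proof -
  obtain y z where "y \<in> span S" "\<And>w. w \<in> span S \<Longrightarrow> orthogonal z w" "x = y + z"
    using orthogonal_subspace_decomp_exists by blast
  hence "\<exists>y. y \<in> span S \<and> (\<forall>w\<in>span S. (x - y) \<bullet> w = 0)"
    by (intro exI[of _ y]) (auto simp: orthogonal_def)
  thus ?thesis unfolding orth_proj_def by (rule someI_ex)
qed

lemma orth_proj_unique:
  assumes "y \<in> span S" "\<forall>w\<in>span S. (x - y) \<bullet> w = 0"
  shows "orth_proj S x = y"
proof -
  let ?d = "orth_proj S x - y"
  have d: "?d \<in> span S" using orth_proj_spec assms(1) span_diff by blast
  have "(x - y) \<bullet> ?d = 0" using assms(2) d by blast
  moreover have "(x - orth_proj S x) \<bullet> ?d = 0" using orth_proj_spec d by blast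
  ultimately have "?d \<bullet> ?d = 0" by (simp add: inner_diff_left inner_diff_right)
  thus ?thesis by simp
qed

lemma orth_proj_span_id: "x \<in> span S \<Longrightarrow> orth_proj S x = x"
  by (rule orth_proj_unique) auto

lemma orth_proj_add: "orth_proj S (x1 + x2) = orth_proj S x1 + orth_proj S x2"
  by (rule orth_proj_unique)
     (use orth_proj_spec[of S x1] orth_proj_spec[of S x2] in
       \<open>auto intro: span_add simp: algebra_simps inner_add_left\<close>)

lemma orth_proj_scaleR: "orth_proj S (c *\<^sub>R x) = c *\<^sub>R orth_proj S x"
proof (rule orth_proj_unique)
  show "c *\<^sub>R orth_proj S x \<in> span S" using orth_proj_spec span_scale by blast
  show "\<forall>w\<in>span S. (c *\<^sub>R x - c *\<^sub>R orth_proj S x) \<bullet> w = 0"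
    using orth_proj_spec[of S x] by (metis inner_scaleR_left mult_zero_right scaleR_right_diff_distrib)
qed

lemma orth_proj_self_adjoint: "orth_proj S x \<bullet> z = x \<bullet> orth_proj S z"
proof -
  have "(x - orth_proj S x) \<bullet> orth_proj S z = 0" "(z - orth_proj S z) \<bullet> orth_proj S x = 0"
    using orth_proj_spec by blast+
  hence "x \<bullet> orth_proj S z = orth_proj S x \<bullet> orth_proj S z"
    "z \<bullet> orth_proj S x = orth_proj S z \<bullet> orth_proj S x"
    by (simp_all add: inner_diff_left)
  thus ?thesis by (simp add: inner_commute)
qed

lemma inner_matrix_vector_mult: "((A::real^'n::finite^'m::finite) *v x) \<bullet> y = x \<bullet> (transpose A *v y)"
  by (metis dot_lmul_matrix vector_transpose_matrix)

lemma transpose_eq_if_self_adjoint: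
  fixes M :: "real^'n::finite^'n"
  assumes "\<And>x y. (M *v x) \<bullet> y = x \<bullet> (M *v y)"
  shows "transpose M = M"
proof -
  have "M $ i $ j = M $ j $ i" for i j
    using assms[of "axis j 1" "axis i 1"]
    by (simp add: matrix_vector_mult_basis inner_axis inner_axis' column_def)
  thus ?thesis by (simp add: vec_eq_iff transpose_def)
qed

lemma span_range_matrix_vector_mult: "span (range ((*v) (M::real^'n::finite^'m::finite))) = range ((*v) M)"
  using linear_subspace_image[OF matrix_vector_mul_linear subspace_UNIV] by (simp add: span_eq_iff)

definition row_space :: "real^'n::finite^'m::finite \<Rightarrow> (real^'n) set" where
  "row_space A = range ((*v) (transpose A))"

definition column_space :: "real^'n::finite^'m::finite \<Rightarrow> (real^'m) set" where
  "column_space A = range ((*v) A)"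

lemma span_row_space [simp]: "span (row_space A) = row_space A"
  unfolding row_space_def by (rule span_range_matrix_vector_mult)

lemma span_column_space [simp]: "span (column_space A) = column_space A"
  unfolding column_space_def by (rule span_range_matrix_vector_mult)

lemma subspace_row_space: "subspace (row_space A)"
  by (metis span_row_space subspace_span)

lemma row_space_inter_kernel:
  assumes "v \<in> row_space A" "A *v v = 0"
  shows "v = 0"
proof -
  obtain t where "v = transpose A *v t" using assms(1) unfolding row_space_def by blast
  hence "v \<bullet> v = t \<bullet> (A *v v)"
    using inner_matrix_vector_mult[of "transpose A" t v] by (simp add: inner_commute)
  thus ?thesis using assms(2) by simp
qed

lemma matrix_vector_mult_orth_proj_row_space: "A *v orth_proj (row_space A) x = A *v x"
proof -
  let ?d = "x - orth_proj (row_space A) x"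
  have "(A *v ?d) \<bullet> t = 0" for t
  proof -
    have "transpose A *v t \<in> span (row_space A)"
      unfolding row_space_def by (rule span_base rangeI)+
    hence "?d \<bullet> (transpose A *v t) = 0" using orth_proj_spec by blast
    thus ?thesis by (simp add: inner_matrix_vector_mult)
  qed
  hence "A *v ?d = 0" by (metis inner_eq_zero_iff)
  thus ?thesis by (simp add: matrix_vector_mult_diff_distrib)
qed

text \<open>The pseudo-inverse as a map: \<open>y\<close> goes to the unique preimage in the row space of the
  projection of \<open>y\<close> onto the column space.\<close>
definition pinv_map :: "real^'n::finite^'m::finite \<Rightarrow> real^'m \<Rightarrow> real^'n" where
  "pinv_map A y = orth_proj (row_space A) (SOME z. A *v z = orth_proj (column_space A) y)"

lemma pinv_map_spec:
  "pinv_map A y \<in> row_space A \<and> A *v pinv_map A y = orth_proj (column_space A) y"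
proof
  show "pinv_map A y \<in> row_space A"
    unfolding pinv_map_def using orth_proj_spec span_row_space by metis
  have "orth_proj (column_space A) y \<in> column_space A"
    using orth_proj_spec span_column_space by metis
  hence "A *v (SOME z. A *v z = orth_proj (column_space A) y) = orth_proj (column_space A) y"
    unfolding column_space_def by (metis (mono_tags, lifting) rangeE someI_ex)
  thus "A *v pinv_map A y = orth_proj (column_space A) y"
    unfolding pinv_map_def by (simp only: matrix_vector_mult_orth_proj_row_space)
qed

lemma pinv_map_unique:
  assumes "v \<in> row_space A" "A *v v = orth_proj (column_space A) y"
  shows "v = pinv_map A y"
proof -
  have "v - pinv_map A y \<in> row_space A"
    using assms(1) pinv_map_spec subspace_row_space subspace_diff by blast
  moreover have "A *v (v - pinv_map A y) = 0"
    using assms(2) pinv_map_spec[of A y] by (simp add: matrix_vector_mult_diff_distrib)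
  ultimately show ?thesis using row_space_inter_kernel by fastforce
qed

lemma linear_pinv_map: "linear (pinv_map A)"
proof (rule linearI)
  fix y1 y2
  show "pinv_map A (y1 + y2) = pinv_map A y1 + pinv_map A y2"
    using pinv_map_spec[of A y1] pinv_map_spec[of A y2] subspace_row_space
    by (intro pinv_map_unique[symmetric])
       (auto intro: subspace_add simp: matrix_vector_right_distrib orth_proj_add)
next
  fix c y
  show "pinv_map A (c *\<^sub>R y) = c *\<^sub>R pinv_map A y"
    using pinv_map_spec[of A y] subspace_row_space
    by (intro pinv_map_unique[symmetric])
       (auto intro: subspace_scale simp: orth_proj_scaleR matrix_vector_mult_scaleR)
qed

lemma is_MP_inverse_matrix_pinv_map: "is_MP_inverse A (matrix (pinv_map A))"
proof -
  define B where "B = matrix (pinv_map A)"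
  have Bv: "B *v y = pinv_map A y" for y
    unfolding B_def by (simp add: linear_pinv_map matrix_works)
  have AB: "(A ** B) *v y = orth_proj (column_space A) y" for y
    by (simp add: matrix_vector_mul_assoc[symmetric] Bv pinv_map_spec)
  have BA: "(B ** A) *v x = orth_proj (row_space A) x" for x
  proof -
    have "orth_proj (row_space A) x \<in> row_space A"
      using orth_proj_spec span_row_space by metis
    moreover have "A *v orth_proj (row_space A) x = orth_proj (column_space A) (A *v x)"
    proof -
      have "A *v x \<in> span (column_space A)"
        unfolding column_space_def by (rule span_base rangeI)+
      thus ?thesis by (simp add: matrix_vector_mult_orth_proj_row_space orth_proj_span_id)
    qed
    ultimately have "orth_proj (row_space A) x = pinv_map A (A *v x)" by (rule pinv_map_unique)
    thus ?thesis by (simp add: matrix_vector_mul_assoc[symmetric] Bv)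
  qed
  have "(A ** B ** A) *v x = A *v x" for x
    using BA[of x] by (simp add: matrix_vector_mul_assoc[symmetric] matrix_vector_mult_orth_proj_row_space)
  moreover have "(B ** A ** B) *v y = B *v y" for y
  proof -
    have "(B ** A ** B) *v y = orth_proj (row_space A) (pinv_map A y)"
      by (subst matrix_vector_mul_assoc[symmetric]) (simp only: BA Bv)
    thus ?thesis using pinv_map_spec[of A y] by (simp add: Bv orth_proj_span_id)
  qed
  moreover have "transpose (A ** B) = A ** B" "transpose (B ** A) = B ** A"
    by (auto intro: transpose_eq_if_self_adjoint simp: AB BA orth_proj_self_adjoint)
  ultimately show ?thesis
    unfolding is_MP_inverse_def B_def[symmetric] by (simp add: matrix_eq)
qed

lemma is_MP_inverse_unique:
  assumes "is_MP_inverse (A::real^'n::finite^'m::finite) B" "is_MP_inverse A C"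
  shows "B = C"
proof -
  have b: "A ** B ** A = A" "B ** A ** B = B" "transpose (A ** B) = A ** B" "transpose (B ** A) = B ** A"
    using assms(1) unfolding is_MP_inverse_def by auto
  have c: "A ** C ** A = A" "C ** A ** C = C" "transpose (A ** C) = A ** C" "transpose (C ** A) = C ** A"
    using assms(2) unfolding is_MP_inverse_def by auto
  have "B = B ** (A ** B)" using b(2) by (simp add: matrix_mul_assoc)
  also have "\<dots> = B ** transpose (A ** B)" using b(3) by simp
  also have "\<dots> = B ** transpose B ** transpose A" by (simp add: matrix_transpose_mul matrix_mul_assoc)
  also have "\<dots> = B ** transpose B ** transpose (A ** C ** A)" using c(1) by simp
  also have "\<dots> = B ** transpose (A ** B) ** transpose (A ** C)"
    by (simp add: matrix_transpose_mul matrix_mul_assoc)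
  also have "\<dots> = B ** A ** B ** A ** C" using b(3) c(3) by (simp add: matrix_mul_assoc)
  also have "\<dots> = B ** A ** C" using b(2) by simp
  finally have 1: "B = B ** A ** C" .
  have "C = (C ** A) ** C" using c(2) by simp
  also have "\<dots> = transpose (C ** A) ** C" using c(4) by simp
  also have "\<dots> = transpose A ** transpose C ** C" by (simp add: matrix_transpose_mul)
  also have "\<dots> = transpose (A ** B ** A) ** transpose C ** C" using b(1) by simp
  also have "\<dots> = transpose (B ** A) ** transpose (C ** A) ** C"
    by (simp add: matrix_transpose_mul matrix_mul_assoc)
  also have "\<dots> = B ** A ** C ** A ** C" using b(4) c(4) by (simp add: matrix_mul_assoc)
  also have "\<dots> = B ** A ** C" using c(2) by (metis matrix_mul_assoc)
  finally have 2: "C = B ** A ** C" .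
  from 1 2 show ?thesis by simp
qed

lemma is_MP_inverse_MP_inverse: "is_MP_inverse A (MP_inverse (A::real^'n::finite^'m::finite))"
proof -
  have "\<exists>!B. is_MP_inverse A B"
    using is_MP_inverse_matrix_pinv_map is_MP_inverse_unique by blast
  thus ?thesis unfolding MP_inverse_def by (rule theI')
qed

lemma matrix_inv_mult:
  fixes A :: "real^'n::finite^'n"
  assumes "det A \<noteq> 0"
  shows "A ** matrix_inv A = mat 1 \<and> matrix_inv A ** A = mat 1"
proof -
  have "invertible A" using assms invertible_det_nz by blast
  hence "\<exists>A'. A ** A' = mat 1 \<and> A' ** A = mat 1" unfolding invertible_def by blast
  thus ?thesis unfolding matrix_inv_def by (rule someI_ex)
qed

lemma transpose_matrix_inv:
  fixes A :: "real^'n::finite^'n"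
  assumes "det A \<noteq> 0" "transpose A = A"
  shows "transpose (matrix_inv A) = matrix_inv A"
proof -
  have r: "A ** matrix_inv A = mat 1" and l: "matrix_inv A ** A = mat 1"
    using matrix_inv_mult[OF assms(1)] by auto
  have "transpose (matrix_inv A) ** A = mat 1"
    using r assms(2) by (metis matrix_transpose_mul transpose_mat)
  hence "transpose (matrix_inv A) = transpose (matrix_inv A) ** (A ** matrix_inv A)"
    using r by simp
  also have "\<dots> = matrix_inv A"
    using \<open>transpose (matrix_inv A) ** A = mat 1\<close> by (simp add: matrix_mul_assoc)
  finally show ?thesis .
qed

lemma matrix_inv_cramer:
  fixes A :: "real^'n::finite^'n"
  assumes d: "det A \<noteq> 0"
  shows "matrix_inv A $ k $ j = det (\<chi> i l. if l = k then axis j 1 $ i else A $ i $ l) / det A"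
proof -
  let ?x = "matrix_inv A *v axis j 1"
  have "A *v ?x = axis j 1"
    using matrix_inv_mult[OF d] by (simp add: matrix_vector_mul_assoc)
  hence "?x = (\<chi> k. det (\<chi> i l. if l = k then axis j 1 $ i else A $ i $ l) / det A)"
    using cramer[OF d] by blast
  hence "?x $ k = det (\<chi> i l. if l = k then axis j 1 $ i else A $ i $ l) / det A" by simp
  moreover have "?x $ k = matrix_inv A $ k $ j"
    by (simp add: matrix_vector_mult_basis column_def)
  ultimately show ?thesis by simp
qed

lemma matrix_inv_scaleR:
  fixes A :: "real^'n::finite^'n"
  assumes d: "det A \<noteq> 0" and c: "c \<noteq> 0"
  shows "matrix_inv (c *\<^sub>R A) = inverse c *\<^sub>R matrix_inv A"
proof -
  have iA: "invertible A" using d invertible_det_nz by blast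
  have "invertible (c *\<^sub>R A)" using scalar_invertible[OF c iA] .
  hence dc: "det (c *\<^sub>R A) \<noteq> 0" using invertible_det_nz by blast
  let ?B = "inverse c *\<^sub>R matrix_inv A"
  let ?X = "matrix_inv (c *\<^sub>R A)"
  have MB: "(c *\<^sub>R A) ** ?B = mat 1"
    using matrix_inv_mult[OF d] c by (simp add: matrix_scalar_ac scalar_matrix_assoc[symmetric])
  have XM: "?X ** (c *\<^sub>R A) = mat 1" using matrix_inv_mult[OF dc] by blast
  have "?B = (?X ** (c *\<^sub>R A)) ** ?B" using XM by simp
  also have "\<dots> = ?X ** ((c *\<^sub>R A) ** ?B)" by (simp add: matrix_mul_assoc)
  also have "\<dots> = ?X" using MB by simp
  finally show ?thesis by simp
qed

lemma differentiable_prod: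
  fixes f :: "'i \<Rightarrow> real^'n::finite \<Rightarrow> real"
  assumes "finite S" "\<And>i. i \<in> S \<Longrightarrow> f i differentiable (at x)"
  shows "(\<lambda>y. \<Prod>i\<in>S. f i y) differentiable (at x)"
  using assms
proof (induction S rule: finite_induct)
  case empty then show ?case by simp
next
  case (insert a F)
  have "(\<lambda>y. f a y * (\<Prod>i\<in>F. f i y)) differentiable (at x)"
    using insert by (intro differentiable_mult) auto
  thus ?case using insert by simp
qed

lemma differentiable_det:
  fixes M :: "real^'n::finite \<Rightarrow> real^'m::finite^'m"
  assumes "\<And>i l. (\<lambda>y. M y $ i $ l) differentiable (at x)"
  shows "(\<lambda>y. det (M y)) differentiable (at x)"
  unfolding det_def
  by (intro differentiable_sum ballI differentiable_mult differentiable_const differentiable_prod)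
     (auto simp: finite_permutations assms)

definition kdelta :: "'n \<Rightarrow> 'n \<Rightarrow> real" where "kdelta a b = (if a = b then 1 else 0)"

lemma sum_kdelta_left [simp]: "(\<Sum>b\<in>(UNIV::'n::finite set). kdelta a b * f b) = f a"
proof -
  have "(\<Sum>b\<in>UNIV. kdelta a b * f b) = (\<Sum>b\<in>UNIV. if a = b then f b else 0)"
    by (rule sum.cong) (auto simp: kdelta_def)
  thus ?thesis by (simp add: sum.delta')
qed

lemma sum_kdelta_left' [simp]: "(\<Sum>b\<in>(UNIV::'n::finite set). kdelta b a * f b) = f a"
proof -
  have "(\<Sum>b\<in>UNIV. kdelta b a * f b) = (\<Sum>b\<in>UNIV. if b = a then f b else 0)"
    by (rule sum.cong) (auto simp: kdelta_def)
  thus ?thesis by (simp add: sum.delta)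
qed

lemma sum_kdelta_right [simp]: "(\<Sum>b\<in>(UNIV::'n::finite set). f b * kdelta a b) = f a"
proof -
  have "(\<Sum>b\<in>UNIV. f b * kdelta a b) = (\<Sum>b\<in>UNIV. if a = b then f b else 0)"
    by (rule sum.cong) (auto simp: kdelta_def)
  thus ?thesis by (simp add: sum.delta')
qed

lemma sum_kdelta_right' [simp]: "(\<Sum>b\<in>(UNIV::'n::finite set). f b * kdelta b a) = f a"
proof -
  have "(\<Sum>b\<in>UNIV. f b * kdelta b a) = (\<Sum>b\<in>UNIV. if b = a then f b else 0)"
    by (rule sum.cong) (auto simp: kdelta_def)
  thus ?thesis by (simp add: sum.delta)
qed

lemma sum_kdelta_mid [simp]: "(\<Sum>b\<in>(UNIV::'n::finite set). f b * kdelta a b * h b) = f a * h a"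
  using sum_kdelta_right[of "\<lambda>b. f b * h b" a] by (simp add: mult_ac)

lemma sum_kdelta_mid' [simp]: "(\<Sum>b\<in>(UNIV::'n::finite set). f b * kdelta b a * h b) = f a * h a"
  using sum_kdelta_right'[of "\<lambda>b. f b * h b" a] by (simp add: mult_ac)

lemma sum_kdelta_diag: "(\<Sum>b\<in>(UNIV::'n::finite set). kdelta b b) = real CARD('n)"
  by (simp add: kdelta_def)

lemma sum_sum_kdelta: "(\<Sum>b\<in>UNIV. \<Sum>e\<in>UNIV. kdelta b (a::'n::finite) * f b e) = (\<Sum>e\<in>UNIV. f a e)"
  by (subst sum.swap) simp

locale metric_chart =
  fixes g :: "real^'n::finite \<Rightarrow> real^'n^'n" and U :: "(real^'n) set"
  assumes metric: "metric_on U g"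
begin

definition g_dd where "g_dd y a b = g y $ a $ b"
definition g_uu where "g_uu y a b = ginv g y $ a $ b"
definition pd_g where "pd_g c y a b = pd c (\<lambda>z. g z $ a $ b) y"

lemma open_U: "open U" using metric unfolding metric_on_def by blast
lemma smooth_g: "smooth_on U g" using metric unfolding metric_on_def by blast
lemma transpose_g: "y \<in> U \<Longrightarrow> transpose (g y) = g y" using metric unfolding metric_on_def by blast
lemma det_g: "y \<in> U \<Longrightarrow> det (g y) \<noteq> 0" using metric unfolding metric_on_def by blast

lemma g_dd_sym:
  assumes y: "y \<in> U"
  shows "g_dd y a b = g_dd y b a"
proof -
  have "transpose (g y) $ a $ b = g y $ a $ b" using transpose_g[OF y] by simp
  thus ?thesis unfolding g_dd_def by (simp add: transpose_def)
qed

lemma g_uu_sym: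
  assumes y: "y \<in> U"
  shows "g_uu y a b = g_uu y b a"
proof -
  have "transpose (matrix_inv (g y)) $ a $ b = matrix_inv (g y) $ a $ b"
    using transpose_matrix_inv[OF det_g[OF y] transpose_g[OF y]] by simp
  thus ?thesis unfolding g_uu_def ginv_def by (simp add: transpose_def)
qed

lemma g_uu_g_dd:
  assumes y: "y \<in> U"
  shows "(\<Sum>m\<in>UNIV. g_uu y k m * g_dd y m n) = kdelta k n"
proof -
  have "(matrix_inv (g y) ** g y) $ k $ n = mat 1 $ k $ n"
    using matrix_inv_mult[OF det_g[OF y]] by simp
  thus ?thesis unfolding g_uu_def g_dd_def ginv_def kdelta_def
    by (simp add: matrix_matrix_mult_def mat_def)
qed

lemma g_dd_g_uu:
  assumes y: "y \<in> U"
  shows "(\<Sum>m\<in>UNIV. g_dd y k m * g_uu y m n) = kdelta k n"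
proof -
  have "(g y ** matrix_inv (g y)) $ k $ n = mat 1 $ k $ n"
    using matrix_inv_mult[OF det_g[OF y]] by simp
  thus ?thesis unfolding g_uu_def g_dd_def ginv_def kdelta_def
    by (simp add: matrix_matrix_mult_def mat_def)
qed

lemma smooth_g_entry: "smooth_on U (\<lambda>y. g y $ a $ b)"
  using smooth_on_vec_nth[OF open_U smooth_on_vec_nth[OF open_U smooth_g]] by simp

lemma differentiable_g_entry: "y \<in> U \<Longrightarrow> (\<lambda>z. g z $ a $ b) differentiable (at y)"
  using smooth_on_differentiable[OF smooth_g_entry, of y "[]"] by simp

lemma differentiable_pd_g: "y \<in> U \<Longrightarrow> (\<lambda>z. pd_g c z a b) differentiable (at y)"
  using smooth_on_differentiable[OF smooth_g_entry, of y "[c]"] unfolding pd_g_def by simp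

lemma ginv_cramer: "y \<in> U \<Longrightarrow> ginv g y $ k $ j =
   det (\<chi> i l. if l = k then axis j 1 $ i else g y $ i $ l) / det (g y)"
  unfolding ginv_def using matrix_inv_cramer[OF det_g] by blast

lemma differentiable_ginv_entry:
  assumes y: "y \<in> U"
  shows "(\<lambda>z. ginv g z $ k $ j) differentiable (at y)"
proof -
  have "(\<lambda>z. det (\<chi> i l. if l = k then axis j 1 $ i else g z $ i $ l) / det (g z)) differentiable (at y)"
  proof (intro differentiable_divide differentiable_det)
    show "det (g y) \<noteq> 0" using det_g[OF y] .
    fix i l
    show "(\<lambda>z. g z $ i $ l) differentiable (at y)" using differentiable_g_entry[OF y] .
    show "(\<lambda>z. (\<chi> i l. if l = k then axis j 1 $ i else g z $ i $ l) $ i $ l) differentiable (at y)"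
      using differentiable_g_entry[OF y] by (cases "l = k") auto
  qed
  thus ?thesis by (rule differentiable_cong_open[OF open_U y, rotated]) (simp add: ginv_cramer)
qed

lemma pd_g_sym: "y \<in> U \<Longrightarrow> pd_g c y a b = pd_g c y b a"
  unfolding pd_g_def using pd_cong_open[OF open_U, of y "\<lambda>z. g z $ a $ b" "\<lambda>z. g z $ b $ a"] g_dd_sym
  unfolding g_dd_def by blast

abbreviation "Chr y \<equiv> christoffel g y"

lemma christoffel_eq: "christoffel g y c a b = (1/2) * (\<Sum>d\<in>UNIV. g_uu y c d * (pd_g a y d b + pd_g b y d a - pd_g d y a b))"
  unfolding christoffel_def g_uu_def pd_g_def by simp

lemma christoffel_sym: "y \<in> U \<Longrightarrow> christoffel g y c a b = christoffel g y c b a"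
  unfolding christoffel_eq using pd_g_sym[of y _ a b] by (simp add: algebra_simps)

lemma differentiable_christoffel: "y \<in> U \<Longrightarrow> (\<lambda>z. christoffel g z c a b) differentiable (at y)"
  unfolding christoffel_def
  by (intro differentiable_mult differentiable_sum differentiable_add differentiable_diff ballI
        differentiable_const differentiable_ginv_entry differentiable_pd_g[unfolded pd_g_def] finite) auto

lemma lower_christoffel:
  assumes y: "y \<in> U"
  shows "(\<Sum>e\<in>UNIV. g_dd y d e * christoffel g y e a b) = (1/2) * (pd_g a y d b + pd_g b y d a - pd_g d y a b)"
proof -
  have "(\<Sum>e\<in>UNIV. g_dd y d e * christoffel g y e a b)
     = (1/2) * (\<Sum>f\<in>UNIV. (\<Sum>e\<in>UNIV. g_dd y d e * g_uu y e f) * (pd_g a y f b + pd_g b y f a - pd_g f y a b))"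
    unfolding christoffel_eq sum_distrib_left sum_distrib_right
    by (subst sum.swap) (simp add: mult_ac sum_distrib_left)
  also have "\<dots> = (1/2) * (pd_g a y d b + pd_g b y d a - pd_g d y a b)"
    using g_dd_g_uu[OF y] by simp
  finally show ?thesis .
qed

lemma pd_g_christoffel:
  assumes y: "y \<in> U"
  shows "pd_g c y a b = (\<Sum>e\<in>UNIV. christoffel g y e c a * g_dd y e b) + (\<Sum>e\<in>UNIV. christoffel g y e c b * g_dd y a e)"
proof -
  have 1: "(\<Sum>e\<in>UNIV. christoffel g y e c a * g_dd y e b) = (1/2) * (pd_g c y b a + pd_g a y b c - pd_g b y c a)"
    using lower_christoffel[OF y, of b c a] g_dd_sym[OF y] by (simp add: mult.commute)
  have 2: "(\<Sum>e\<in>UNIV. christoffel g y e c b * g_dd y a e) = (1/2) * (pd_g c y a b + pd_g b y a c - pd_g a y c b)"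
    using lower_christoffel[OF y, of a c b] by (simp add: mult.commute)
  show ?thesis unfolding 1 2 using pd_g_sym[OF y, of c a b] pd_g_sym[OF y, of a b c] pd_g_sym[OF y, of b a c]
    by (simp add: algebra_simps)
qed

lemma pd_ginv_mult_g:
  assumes y: "y \<in> U"
  shows "(\<Sum>m\<in>UNIV. pd c (\<lambda>z. ginv g z $ k $ m) y * g_dd y m n)
    = - (\<Sum>m\<in>UNIV. g_uu y k m * pd_g c y m n)"
proof -
  have "pd c (\<lambda>z. \<Sum>m\<in>UNIV. ginv g z $ k $ m * g z $ m $ n) y = pd c (\<lambda>z. kdelta k n) y"
    by (rule pd_cong_open[OF open_U y]) (use g_uu_g_dd in \<open>simp add: g_uu_def g_dd_def\<close>)
  moreover have "pd c (\<lambda>z. \<Sum>m\<in>UNIV. ginv g z $ k $ m * g z $ m $ n) y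
      = (\<Sum>m\<in>UNIV. pd c (\<lambda>z. ginv g z $ k $ m) y * g_dd y m n + g_uu y k m * pd_g c y m n)"
    by (subst pd_sum)
       (auto intro!: differentiable_mult differentiable_ginv_entry[OF y] differentiable_g_entry[OF y] sum.cong
         simp: pd_mult differentiable_ginv_entry[OF y] differentiable_g_entry[OF y] g_dd_def g_uu_def pd_g_def)
  ultimately show ?thesis by (simp add: pd_const sum.distrib eq_neg_iff_add_eq_0)
qed

lemma pd_ginv:
  assumes y: "y \<in> U"
  shows "pd c (\<lambda>z. ginv g z $ k $ l) y =
    - (\<Sum>m\<in>UNIV. christoffel g y k c m * g_uu y m l) - (\<Sum>m\<in>UNIV. christoffel g y l c m * g_uu y k m)"
proof -
  define dGi where "dGi m = pd c (\<lambda>z. ginv g z $ k $ m) y" for m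
  have "dGi l = (\<Sum>n\<in>UNIV. (\<Sum>m\<in>UNIV. dGi m * g_dd y m n) * g_uu y n l)"
  proof -
    have "(\<Sum>n\<in>UNIV. (\<Sum>m\<in>UNIV. dGi m * g_dd y m n) * g_uu y n l)
        = (\<Sum>m\<in>UNIV. dGi m * (\<Sum>n\<in>UNIV. g_dd y m n * g_uu y n l))"
      unfolding sum_distrib_left sum_distrib_right by (subst sum.swap) (simp add: mult_ac)
    thus ?thesis using g_dd_g_uu[OF y] by simp
  qed
  also have "\<dots> = - (\<Sum>n\<in>UNIV. \<Sum>m\<in>UNIV. g_uu y k m * pd_g c y m n * g_uu y n l)"
    unfolding dGi_def pd_ginv_mult_g[OF y] by (simp add: sum_distrib_right sum_negf)
  also have "(\<Sum>n\<in>UNIV. \<Sum>m\<in>UNIV. g_uu y k m * pd_g c y m n * g_uu y n l)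
     = (\<Sum>n\<in>UNIV. \<Sum>m\<in>UNIV. \<Sum>e\<in>UNIV. g_uu y k m * christoffel g y e c m * g_dd y e n * g_uu y n l)
     + (\<Sum>n\<in>UNIV. \<Sum>m\<in>UNIV. \<Sum>e\<in>UNIV. g_uu y k m * christoffel g y e c n * g_dd y m e * g_uu y n l)"
    unfolding pd_g_christoffel[OF y] by (simp add: sum.distrib sum_distrib_left sum_distrib_right algebra_simps)
  also have "(\<Sum>n\<in>UNIV. \<Sum>m\<in>UNIV. \<Sum>e\<in>UNIV. g_uu y k m * christoffel g y e c m * g_dd y e n * g_uu y n l)
     = (\<Sum>m\<in>UNIV. christoffel g y l c m * g_uu y k m)"
  proof -
    have "(\<Sum>n\<in>UNIV. \<Sum>m\<in>UNIV. \<Sum>e\<in>UNIV. g_uu y k m * christoffel g y e c m * g_dd y e n * g_uu y n l)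
       = (\<Sum>m\<in>UNIV. \<Sum>e\<in>UNIV. g_uu y k m * christoffel g y e c m * (\<Sum>n\<in>UNIV. g_dd y e n * g_uu y n l))"
      unfolding sum_distrib_left by (subst sum.swap, subst (2) sum.swap) (simp add: mult_ac)
    thus ?thesis using g_dd_g_uu[OF y] by (simp add: kdelta_def mult_ac if_distrib cong: if_cong)
  qed
  also have "(\<Sum>n\<in>UNIV. \<Sum>m\<in>UNIV. \<Sum>e\<in>UNIV. g_uu y k m * christoffel g y e c n * g_dd y m e * g_uu y n l)
     = (\<Sum>n\<in>UNIV. \<Sum>e\<in>UNIV. (\<Sum>m\<in>UNIV. g_uu y k m * g_dd y m e) * christoffel g y e c n * g_uu y n l)"
    unfolding sum_distrib_right by (rule sum.cong[OF refl], subst sum.swap) (simp add: mult_ac)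
  also have "\<dots> = (\<Sum>m\<in>UNIV. christoffel g y k c m * g_uu y m l)"
    using g_uu_g_dd[OF y] by (simp add: mult.assoc)
  finally show ?thesis unfolding dGi_def by simp
qed

end

text \<open>The algebra of the conformal change at a single point. \<open>G\<close>, \<open>Gi\<close>, \<open>\<Gamma>\<close> stand for
  \<open>g\<^sub>a\<^sub>b\<close>, \<open>g\<^sup>a\<^sup>b\<close>, \<open>\<Gamma>\<^sup>c\<^sub>a\<^sub>b\<close>, \<open>u\<close> for the covector \<open>d log \<Omega>\<^sup>-\<^sup>1\<close> and \<open>H b a\<close> for \<open>\<partial>\<^sub>b u\<^sub>a\<close>;
  \<open>K\<close> is the difference of the Christoffel symbols of \<open>\<Omega>\<^sup>-\<^sup>2 g\<close> and \<open>g\<close>, and \<open>dG\<close>, \<open>dGi\<close>,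
  \<open>dK\<close> are the partial derivatives of \<open>g\<^sub>a\<^sub>b\<close>, \<open>g\<^sup>a\<^sup>b\<close>, \<open>K\<close>, with the derivative index first.\<close>
locale conformal_jet =
  fixes G Gi :: "'n::finite \<Rightarrow> 'n \<Rightarrow> real" and \<Gamma> :: "'n \<Rightarrow> 'n \<Rightarrow> 'n \<Rightarrow> real"
    and u :: "'n \<Rightarrow> real" and H :: "'n \<Rightarrow> 'n \<Rightarrow> real"
  assumes Gsym: "G a b = G b a" and Gisym: "Gi a b = Gi b a"
    and GGi: "(\<Sum>m\<in>UNIV. G a m * Gi m b) = kdelta a b"
    and GiG: "(\<Sum>m\<in>UNIV. Gi a m * G m b) = kdelta a b"
    and \<Gamma>sym: "\<Gamma> c a b = \<Gamma> c b a"
    and Hsym: "H a b = H b a"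
begin

definition "u_up d = (\<Sum>e\<in>UNIV. Gi d e * u e)"
definition "u_sq = (\<Sum>e\<in>UNIV. u e * u_up e)"
definition "nabla_u a c = H a c - (\<Sum>e\<in>UNIV. \<Gamma> e a c * u e)"
definition "box_u = (\<Sum>b\<in>UNIV. \<Sum>d\<in>UNIV. Gi b d * nabla_u b d)"
definition "trace_\<Gamma> e = (\<Sum>b\<in>UNIV. \<Gamma> b b e)"
definition "dG b a c = (\<Sum>e\<in>UNIV. \<Gamma> e b a * G e c) + (\<Sum>e\<in>UNIV. \<Gamma> e b c * G a e)"
definition "dGi b d e = - (\<Sum>m\<in>UNIV. \<Gamma> d b m * Gi m e) - (\<Sum>m\<in>UNIV. \<Gamma> e b m * Gi d m)"
definition "K d a c = kdelta d a * u c + kdelta d c * u a - G a c * u_up d"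
definition "dK b d a c = kdelta d a * H b c + kdelta d c * H b a - dG b a c * u_up d
   - G a c * (\<Sum>e\<in>UNIV. dGi b d e * u e + Gi d e * H b e)"
definition "D = real CARD('n)"

lemma lower_u_up: "(\<Sum>b\<in>UNIV. G a b * u_up b) = u a"
proof -
  have "(\<Sum>b\<in>UNIV. G a b * u_up b) = (\<Sum>e\<in>UNIV. (\<Sum>b\<in>UNIV. G a b * Gi b e) * u e)"
    unfolding u_up_def sum_distrib_left sum_distrib_right mult.assoc by (rule sum.swap)
  thus ?thesis by (simp add: GGi)
qed

lemma lower_u_up': "(\<Sum>b\<in>UNIV. u_up b * G b a) = u a"
  using lower_u_up[of a] by (simp add: Gsym mult.commute)

lemma lower_u_up'': "(\<Sum>b\<in>UNIV. G b a * u_up b) = u a"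
  using lower_u_up[of a] by (simp add: Gsym)

lemma trace_K: "(\<Sum>b\<in>UNIV. K b b e) = D * u e"
proof -
  have "(\<Sum>b\<in>UNIV. K b b e) = (\<Sum>b\<in>UNIV. kdelta (b::'n) b * u e) + (\<Sum>b\<in>UNIV. kdelta b e * u b) - (\<Sum>b\<in>UNIV. u_up b * G b e)"
    unfolding K_def by (simp add: sum.distrib sum_subtractf algebra_simps)
  moreover have "(\<Sum>b\<in>UNIV. kdelta (b::'n) b * u e) = D * u e"
    by (simp add: sum_distrib_right[symmetric] sum_kdelta_diag D_def)
  ultimately show ?thesis using lower_u_up' by simp
qed

lemma sum_trace_\<Gamma>_K: "(\<Sum>b\<in>UNIV. \<Sum>e\<in>UNIV. \<Gamma> b b e * K e a c)
   = trace_\<Gamma> a * u c + trace_\<Gamma> c * u a - G a c * (\<Sum>e\<in>UNIV. trace_\<Gamma> e * u_up e)"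
proof -
  have "(\<Sum>b\<in>UNIV. \<Sum>e\<in>UNIV. \<Gamma> b b e * K e a c) = (\<Sum>e\<in>UNIV. trace_\<Gamma> e * K e a c)"
    unfolding trace_\<Gamma>_def sum_distrib_right by (rule sum.swap)
  also have "\<dots> = (\<Sum>e\<in>UNIV. kdelta e a * (trace_\<Gamma> e * u c)) + (\<Sum>e\<in>UNIV. kdelta e c * (trace_\<Gamma> e * u a))
      - G a c * (\<Sum>e\<in>UNIV. trace_\<Gamma> e * u_up e)"
    unfolding K_def by (simp add: sum.distrib sum_subtractf sum_distrib_left algebra_simps)
  also have "\<dots> = trace_\<Gamma> a * u c + trace_\<Gamma> c * u a - G a c * (\<Sum>e\<in>UNIV. trace_\<Gamma> e * u_up e)" by simp
  finally show ?thesis .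
qed

lemma sum_trace_K_\<Gamma>: "(\<Sum>b\<in>UNIV. \<Sum>e\<in>UNIV. K b b e * \<Gamma> e a c) = D * (\<Sum>e\<in>UNIV. \<Gamma> e a c * u e)"
proof -
  have "(\<Sum>b\<in>UNIV. \<Sum>e\<in>UNIV. K b b e * \<Gamma> e a c) = (\<Sum>e\<in>UNIV. (\<Sum>b\<in>UNIV. K b b e) * \<Gamma> e a c)"
    unfolding sum_distrib_right by (rule sum.swap)
  thus ?thesis by (simp add: trace_K sum_distrib_left algebra_simps)
qed

lemma sum_trace_K_K: "(\<Sum>b\<in>UNIV. \<Sum>e\<in>UNIV. K b b e * K e a c) = D * (2 * u a * u c - G a c * u_sq)"
proof -
  have "(\<Sum>b\<in>UNIV. \<Sum>e\<in>UNIV. K b b e * K e a c) = (\<Sum>e\<in>UNIV. (\<Sum>b\<in>UNIV. K b b e) * K e a c)"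
    unfolding sum_distrib_right by (rule sum.swap)
  also have "\<dots> = D * (\<Sum>e\<in>UNIV. u e * K e a c)" by (simp add: trace_K sum_distrib_left algebra_simps)
  also have "(\<Sum>e\<in>UNIV. u e * K e a c) = (\<Sum>e\<in>UNIV. kdelta e a * (u e * u c)) + (\<Sum>e\<in>UNIV. kdelta e c * (u e * u a))
      - G a c * (\<Sum>e\<in>UNIV. u e * u_up e)"
    unfolding K_def by (simp add: sum.distrib sum_subtractf sum_distrib_left algebra_simps)
  also have "\<dots> = 2 * u a * u c - G a c * u_sq" by (simp add: u_sq_def)
  finally show ?thesis by simp
qed

lemma sum_\<Gamma>_K: "(\<Sum>b\<in>UNIV. \<Sum>e\<in>UNIV. \<Gamma> b a e * K e b c)
   = trace_\<Gamma> a * u c + (\<Sum>b\<in>UNIV. \<Gamma> b a c * u b) - (\<Sum>b\<in>UNIV. \<Sum>e\<in>UNIV. \<Gamma> b a e * G b c * u_up e)"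
proof -
  have "(\<Sum>b\<in>UNIV. \<Sum>e\<in>UNIV. \<Gamma> b a e * K e b c)
     = (\<Sum>b\<in>UNIV. (\<Sum>e\<in>UNIV. kdelta e b * (\<Gamma> b a e * u c)) + (\<Sum>e\<in>UNIV. kdelta e c * (\<Gamma> b a e * u b))
          - (\<Sum>e\<in>UNIV. \<Gamma> b a e * G b c * u_up e))"
    unfolding K_def by (simp add: sum.distrib sum_subtractf algebra_simps)
  also have "\<dots> = (\<Sum>b\<in>UNIV. \<Gamma> b b a * u c + \<Gamma> b a c * u b - (\<Sum>e\<in>UNIV. \<Gamma> b a e * G b c * u_up e))"
    by (simp add: \<Gamma>sym[of _ a])
  also have "\<dots> = trace_\<Gamma> a * u c + (\<Sum>b\<in>UNIV. \<Gamma> b a c * u b) - (\<Sum>b\<in>UNIV. \<Sum>e\<in>UNIV. \<Gamma> b a e * G b c * u_up e)"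
    by (simp add: sum.distrib sum_subtractf trace_\<Gamma>_def sum_distrib_right)
  finally show ?thesis .
qed

lemma sum_K_\<Gamma>: "(\<Sum>b\<in>UNIV. \<Sum>e\<in>UNIV. K b a e * \<Gamma> e b c)
   = (\<Sum>e\<in>UNIV. \<Gamma> e a c * u e) + u a * trace_\<Gamma> c - (\<Sum>b\<in>UNIV. \<Sum>e\<in>UNIV. G a e * u_up b * \<Gamma> e b c)"
proof -
  have "(\<Sum>b\<in>UNIV. \<Sum>e\<in>UNIV. K b a e * \<Gamma> e b c)
     = (\<Sum>b\<in>UNIV. \<Sum>e\<in>UNIV. kdelta b a * (u e * \<Gamma> e b c)) + (\<Sum>b\<in>UNIV. \<Sum>e\<in>UNIV. kdelta b e * (u a * \<Gamma> e b c))
          - (\<Sum>b\<in>UNIV. \<Sum>e\<in>UNIV. G a e * u_up b * \<Gamma> e b c)"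
    unfolding K_def by (simp add: sum.distrib sum_subtractf algebra_simps)
  also have "(\<Sum>b\<in>UNIV. \<Sum>e\<in>UNIV. kdelta b a * (u e * \<Gamma> e b c)) = (\<Sum>e\<in>UNIV. \<Gamma> e a c * u e)"
    by (simp only: sum_sum_kdelta) (simp add: mult.commute)
  also have "(\<Sum>b\<in>UNIV. \<Sum>e\<in>UNIV. kdelta b e * (u a * \<Gamma> e b c)) = u a * trace_\<Gamma> c"
    by (simp add: trace_\<Gamma>_def sum_distrib_left)
  finally show ?thesis .
qed

lemma sum_K_K: "(\<Sum>b\<in>UNIV. \<Sum>e\<in>UNIV. K b a e * K e b c) = (D + 2) * u a * u c - 2 * G a c * u_sq"
proof -
  have "(\<Sum>b\<in>UNIV. \<Sum>e\<in>UNIV. K b a e * K e b c) =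
     (\<Sum>b\<in>UNIV. \<Sum>e\<in>UNIV. kdelta b a * (u e * kdelta e b * u c)) + (\<Sum>b\<in>UNIV. \<Sum>e\<in>UNIV. kdelta b a * (u e * kdelta e c * u b))
   - (\<Sum>b\<in>UNIV. \<Sum>e\<in>UNIV. kdelta b a * (u e * G b c * u_up e)) + (\<Sum>b\<in>UNIV. \<Sum>e\<in>UNIV. kdelta (b::'n) e * (u a * kdelta e b * u c))
   + (\<Sum>b\<in>UNIV. \<Sum>e\<in>UNIV. kdelta b e * (u a * kdelta e c * u b)) - (\<Sum>b\<in>UNIV. \<Sum>e\<in>UNIV. kdelta b e * (u a * G b c * u_up e))
   - (\<Sum>b\<in>UNIV. \<Sum>e\<in>UNIV. G a e * u_up b * kdelta e b * u c) - (\<Sum>b\<in>UNIV. \<Sum>e\<in>UNIV. G a e * u_up b * kdelta e c * u b)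
   + (\<Sum>b\<in>UNIV. \<Sum>e\<in>UNIV. G a e * u_up b * (G b c * u_up e))"
    unfolding K_def by (simp add: sum.distrib sum_subtractf algebra_simps)
  also have "(\<Sum>b\<in>UNIV. \<Sum>e\<in>UNIV. kdelta b a * (u e * kdelta e b * u c)) = u a * u c"
    by (simp only: sum_sum_kdelta) simp
  also have "(\<Sum>b\<in>UNIV. \<Sum>e\<in>UNIV. kdelta b a * (u e * kdelta e c * u b)) = u a * u c"
    by (simp only: sum_sum_kdelta) simp
  also have "(\<Sum>b\<in>UNIV. \<Sum>e\<in>UNIV. kdelta b a * (u e * G b c * u_up e)) = G a c * u_sq"
    by (simp only: sum_sum_kdelta) (simp add: u_sq_def sum_distrib_left algebra_simps)
  also have "(\<Sum>b\<in>UNIV. \<Sum>e\<in>UNIV. kdelta (b::'n) e * (u a * kdelta e b * u c)) = D * u a * u c"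
  proof -
    have "(\<Sum>b\<in>UNIV. \<Sum>e\<in>UNIV. kdelta (b::'n) e * (u a * kdelta e b * u c)) = (\<Sum>b\<in>UNIV. kdelta (b::'n) b * (u a * u c))"
      by (simp only: sum_kdelta_left) (simp add: mult_ac)
    also have "\<dots> = D * u a * u c" by (simp add: sum_distrib_right[symmetric] sum_kdelta_diag D_def)
    finally show ?thesis .
  qed
  also have "(\<Sum>b\<in>UNIV. \<Sum>e\<in>UNIV. kdelta b e * (u a * kdelta e c * u b)) = u a * u c"
    by simp
  also have "(\<Sum>b\<in>UNIV. \<Sum>e\<in>UNIV. kdelta b e * (u a * G b c * u_up e)) = u a * u c"
    using lower_u_up''[of c] by (simp add: sum_distrib_left[symmetric] mult.assoc)
  also have "(\<Sum>b\<in>UNIV. \<Sum>e\<in>UNIV. G a e * u_up b * kdelta e b * u c) = u a * u c"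
    by (simp only: sum_kdelta_mid') (simp add: sum_distrib_right[symmetric] lower_u_up)
  also have "(\<Sum>b\<in>UNIV. \<Sum>e\<in>UNIV. G a e * u_up b * kdelta e c * u b) = G a c * u_sq"
    by (simp only: sum_kdelta_mid') (simp add: u_sq_def sum_distrib_left algebra_simps)
  also have "(\<Sum>b\<in>UNIV. \<Sum>e\<in>UNIV. G a e * u_up b * (G b c * u_up e)) = u a * u c"
  proof -
    have "(\<Sum>b\<in>UNIV. \<Sum>e\<in>UNIV. G a e * u_up b * (G b c * u_up e)) = (\<Sum>b\<in>UNIV. u_up b * G b c) * (\<Sum>e\<in>UNIV. G a e * u_up e)"
      by (simp add: sum_product algebra_simps)
    thus ?thesis using lower_u_up lower_u_up' by simp
  qed
  finally show ?thesis by (simp add: algebra_simps)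
qed

lemma dGi_u: "(\<Sum>e\<in>UNIV. dGi b d e * u e) =
   - (\<Sum>m\<in>UNIV. \<Gamma> d b m * u_up m) - (\<Sum>m\<in>UNIV. Gi d m * (\<Sum>e\<in>UNIV. \<Gamma> e b m * u e))"
proof -
  have "(\<Sum>e\<in>UNIV. dGi b d e * u e) =
     - (\<Sum>e\<in>UNIV. \<Sum>m\<in>UNIV. \<Gamma> d b m * Gi m e * u e) - (\<Sum>e\<in>UNIV. \<Sum>m\<in>UNIV. \<Gamma> e b m * Gi d m * u e)"
    unfolding dGi_def by (simp add: sum_distrib_right sum_distrib_left sum.distrib sum_subtractf sum_negf algebra_simps)
  also have "(\<Sum>e\<in>UNIV. \<Sum>m\<in>UNIV. \<Gamma> d b m * Gi m e * u e) = (\<Sum>m\<in>UNIV. \<Gamma> d b m * u_up m)"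
    by (subst sum.swap) (simp add: u_up_def sum_distrib_left mult.assoc)
  also have "(\<Sum>e\<in>UNIV. \<Sum>m\<in>UNIV. \<Gamma> e b m * Gi d m * u e) = (\<Sum>m\<in>UNIV. Gi d m * (\<Sum>e\<in>UNIV. \<Gamma> e b m * u e))"
    by (subst sum.swap) (simp add: sum_distrib_left algebra_simps)
  finally show ?thesis .
qed

lemma lower_raise: "(\<Sum>b\<in>UNIV. G b c * (\<Sum>m\<in>UNIV. Gi b m * f m)) = f c"
proof -
  have "(\<Sum>b\<in>UNIV. G b c * (\<Sum>m\<in>UNIV. Gi b m * f m)) = (\<Sum>m\<in>UNIV. (\<Sum>b\<in>UNIV. G c b * Gi b m) * f m)"
    unfolding sum_distrib_left sum_distrib_right by (subst sum.swap) (simp add: Gsym[of _ c] mult.assoc)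
  thus ?thesis by (simp add: GGi)
qed

lemma sum_dK_trace: "(\<Sum>b\<in>UNIV. dK a b b c) = D * H a c"
proof -
  have "(\<Sum>b\<in>UNIV. dK a b b c) = (\<Sum>b\<in>UNIV. kdelta (b::'n) b * H a c) + (\<Sum>b\<in>UNIV. kdelta b c * H a b)
     - (\<Sum>b\<in>UNIV. dG a b c * u_up b) - (\<Sum>b\<in>UNIV. G b c * (\<Sum>e\<in>UNIV. dGi a b e * u e))
     - (\<Sum>b\<in>UNIV. G b c * (\<Sum>e\<in>UNIV. Gi b e * H a e))"
    unfolding dK_def by (simp add: sum.distrib sum_subtractf algebra_simps)
  also have "(\<Sum>b\<in>UNIV. kdelta (b::'n) b * H a c) = D * H a c"
    by (simp add: sum_distrib_right[symmetric] sum_kdelta_diag D_def)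
  also have "(\<Sum>b\<in>UNIV. G b c * (\<Sum>e\<in>UNIV. Gi b e * H a e)) = H a c" by (rule lower_raise)
  also have "(\<Sum>b\<in>UNIV. dG a b c * u_up b) = (\<Sum>b\<in>UNIV. \<Sum>e\<in>UNIV. \<Gamma> e a b * G e c * u_up b) + (\<Sum>e\<in>UNIV. \<Gamma> e a c * u e)"
  proof -
    have "(\<Sum>b\<in>UNIV. dG a b c * u_up b) = (\<Sum>b\<in>UNIV. \<Sum>e\<in>UNIV. \<Gamma> e a b * G e c * u_up b) + (\<Sum>b\<in>UNIV. \<Sum>e\<in>UNIV. \<Gamma> e a c * G b e * u_up b)"
      unfolding dG_def by (simp add: sum.distrib sum_distrib_right sum_distrib_left algebra_simps)
    also have "(\<Sum>b\<in>UNIV. \<Sum>e\<in>UNIV. \<Gamma> e a c * G b e * u_up b) = (\<Sum>e\<in>UNIV. \<Gamma> e a c * (\<Sum>b\<in>UNIV. G b e * u_up b))"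
      by (subst sum.swap) (simp add: sum_distrib_left algebra_simps)
    finally show ?thesis by (simp add: lower_u_up'')
  qed
  also have "(\<Sum>b\<in>UNIV. G b c * (\<Sum>e\<in>UNIV. dGi a b e * u e)) =
      - (\<Sum>b\<in>UNIV. \<Sum>e\<in>UNIV. \<Gamma> e a b * G e c * u_up b) - (\<Sum>e\<in>UNIV. \<Gamma> e a c * u e)"
  proof -
    have "(\<Sum>b\<in>UNIV. G b c * (\<Sum>e\<in>UNIV. dGi a b e * u e)) =
       - (\<Sum>b\<in>UNIV. G b c * (\<Sum>m\<in>UNIV. \<Gamma> b a m * u_up m))
       - (\<Sum>b\<in>UNIV. G b c * (\<Sum>m\<in>UNIV. Gi b m * (\<Sum>e\<in>UNIV. \<Gamma> e a m * u e)))"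
      by (simp only: dGi_u) (simp add: algebra_simps sum_subtractf sum.distrib sum_negf)
    also have "(\<Sum>b\<in>UNIV. G b c * (\<Sum>m\<in>UNIV. Gi b m * (\<Sum>e\<in>UNIV. \<Gamma> e a m * u e)))
       = (\<Sum>e\<in>UNIV. \<Gamma> e a c * u e)" by (rule lower_raise)
    also have "(\<Sum>b\<in>UNIV. G b c * (\<Sum>m\<in>UNIV. \<Gamma> b a m * u_up m)) = (\<Sum>b\<in>UNIV. \<Sum>e\<in>UNIV. \<Gamma> e a b * G e c * u_up b)"
      by (subst sum.swap) (simp add: sum_distrib_left algebra_simps)
    finally show ?thesis by simp
  qed
  finally show ?thesis by (simp add: Hsym)
qed

lemma sum_dK_div: "(\<Sum>b\<in>UNIV. dK b b a c) = 2 * H a c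
    - (\<Sum>b\<in>UNIV. \<Sum>e\<in>UNIV. \<Gamma> e b a * G e c * u_up b) - (\<Sum>b\<in>UNIV. \<Sum>e\<in>UNIV. \<Gamma> e b c * G a e * u_up b)
    + G a c * (\<Sum>m\<in>UNIV. trace_\<Gamma> m * u_up m) - G a c * box_u"
proof -
  have "(\<Sum>b\<in>UNIV. dK b b a c) = (\<Sum>b\<in>UNIV. kdelta b a * H b c) + (\<Sum>b\<in>UNIV. kdelta b c * H b a)
     - (\<Sum>b\<in>UNIV. dG b a c * u_up b) - G a c * ((\<Sum>b\<in>UNIV. \<Sum>e\<in>UNIV. dGi b b e * u e)
     + (\<Sum>b\<in>UNIV. \<Sum>e\<in>UNIV. Gi b e * H b e))"
    unfolding dK_def by (simp add: sum.distrib sum_subtractf algebra_simps sum_distrib_left)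
  also have "(\<Sum>b\<in>UNIV. dG b a c * u_up b) = (\<Sum>b\<in>UNIV. \<Sum>e\<in>UNIV. \<Gamma> e b a * G e c * u_up b)
      + (\<Sum>b\<in>UNIV. \<Sum>e\<in>UNIV. \<Gamma> e b c * G a e * u_up b)"
    unfolding dG_def by (simp add: sum.distrib sum_distrib_right sum_distrib_left algebra_simps)
  also have "(\<Sum>b\<in>UNIV. \<Sum>e\<in>UNIV. dGi b b e * u e) = - (\<Sum>m\<in>UNIV. trace_\<Gamma> m * u_up m)
      - (\<Sum>b\<in>UNIV. \<Sum>m\<in>UNIV. Gi b m * (\<Sum>e\<in>UNIV. \<Gamma> e b m * u e))"
  proof -
    have "(\<Sum>b\<in>UNIV. \<Sum>e\<in>UNIV. dGi b b e * u e) = - (\<Sum>b\<in>UNIV. \<Sum>m\<in>UNIV. \<Gamma> b b m * u_up m)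
      - (\<Sum>b\<in>UNIV. \<Sum>m\<in>UNIV. Gi b m * (\<Sum>e\<in>UNIV. \<Gamma> e b m * u e))"
      by (simp add: dGi_u sum_subtractf sum_negf)
    also have "(\<Sum>b\<in>UNIV. \<Sum>m\<in>UNIV. \<Gamma> b b m * u_up m) = (\<Sum>m\<in>UNIV. trace_\<Gamma> m * u_up m)"
      unfolding trace_\<Gamma>_def sum_distrib_right by (rule sum.swap)
    finally show ?thesis .
  qed
  also have "(\<Sum>b\<in>UNIV. \<Sum>e\<in>UNIV. Gi b e * H b e) = box_u
      + (\<Sum>b\<in>UNIV. \<Sum>m\<in>UNIV. Gi b m * (\<Sum>e\<in>UNIV. \<Gamma> e b m * u e))"
    unfolding box_u_def nabla_u_def by (simp add: algebra_simps sum_subtractf sum.distrib)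
  finally show ?thesis by (simp add: Hsym[of c a] algebra_simps)
qed

lemma ricci_correction: "(\<Sum>b\<in>UNIV. dK b b a c - dK a b b c + (\<Sum>e\<in>UNIV. \<Gamma> b b e * K e a c + K b b e * \<Gamma> e a c
     + K b b e * K e a c - \<Gamma> b a e * K e b c - K b a e * \<Gamma> e b c - K b a e * K e b c))
   = - (D - 2) * nabla_u a c + (D - 2) * u a * u c - G a c * (box_u + (D - 2) * u_sq)"
proof -
  have "(\<Sum>b\<in>UNIV. dK b b a c - dK a b b c + (\<Sum>e\<in>UNIV. \<Gamma> b b e * K e a c + K b b e * \<Gamma> e a c
     + K b b e * K e a c - \<Gamma> b a e * K e b c - K b a e * \<Gamma> e b c - K b a e * K e b c))
   = (\<Sum>b\<in>UNIV. dK b b a c) - (\<Sum>b\<in>UNIV. dK a b b c) + (\<Sum>b\<in>UNIV. \<Sum>e\<in>UNIV. \<Gamma> b b e * K e a c)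
     + (\<Sum>b\<in>UNIV. \<Sum>e\<in>UNIV. K b b e * \<Gamma> e a c) + (\<Sum>b\<in>UNIV. \<Sum>e\<in>UNIV. K b b e * K e a c)
     - (\<Sum>b\<in>UNIV. \<Sum>e\<in>UNIV. \<Gamma> b a e * K e b c) - (\<Sum>b\<in>UNIV. \<Sum>e\<in>UNIV. K b a e * \<Gamma> e b c)
     - (\<Sum>b\<in>UNIV. \<Sum>e\<in>UNIV. K b a e * K e b c)"
    by (simp add: sum.distrib sum_subtractf)
  moreover have q1: "(\<Sum>b\<in>UNIV. \<Sum>e\<in>UNIV. \<Gamma> b a e * G b c * u_up e) = (\<Sum>b\<in>UNIV. \<Sum>e\<in>UNIV. \<Gamma> e b a * G e c * u_up b)"
    by (subst sum.swap) (simp add: \<Gamma>sym[of _ a])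
  moreover have q2: "(\<Sum>b\<in>UNIV. \<Sum>e\<in>UNIV. G a e * u_up b * \<Gamma> e b c) = (\<Sum>b\<in>UNIV. \<Sum>e\<in>UNIV. \<Gamma> e b c * G a e * u_up b)"
    by (simp add: mult_ac)
  ultimately show ?thesis unfolding sum_dK_div sum_dK_trace sum_trace_\<Gamma>_K sum_trace_K_\<Gamma> sum_trace_K_K sum_\<Gamma>_K sum_K_\<Gamma> sum_K_K nabla_u_def by (simp add: algebra_simps)
qed

lemma ricci_shift: "(\<Sum>b\<in>UNIV. (d\<Gamma> b b a c + dK b b a c) - (d\<Gamma> a b b c + dK a b b c)
    + (\<Sum>e\<in>UNIV. (\<Gamma> b b e + K b b e) * (\<Gamma> e a c + K e a c) - (\<Gamma> b a e + K b a e) * (\<Gamma> e b c + K e b c)))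
  = (\<Sum>b\<in>UNIV. d\<Gamma> b b a c - d\<Gamma> a b b c + (\<Sum>e\<in>UNIV. \<Gamma> b b e * \<Gamma> e a c - \<Gamma> b a e * \<Gamma> e b c))
    - (D - 2) * nabla_u a c + (D - 2) * u a * u c - G a c * (box_u + (D - 2) * u_sq)"
proof -
  have "(\<Sum>b\<in>UNIV. (d\<Gamma> b b a c + dK b b a c) - (d\<Gamma> a b b c + dK a b b c)
    + (\<Sum>e\<in>UNIV. (\<Gamma> b b e + K b b e) * (\<Gamma> e a c + K e a c) - (\<Gamma> b a e + K b a e) * (\<Gamma> e b c + K e b c)))
   = (\<Sum>b\<in>UNIV. d\<Gamma> b b a c - d\<Gamma> a b b c + (\<Sum>e\<in>UNIV. \<Gamma> b b e * \<Gamma> e a c - \<Gamma> b a e * \<Gamma> e b c))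
     + (\<Sum>b\<in>UNIV. dK b b a c - dK a b b c + (\<Sum>e\<in>UNIV. \<Gamma> b b e * K e a c + K b b e * \<Gamma> e a c
     + K b b e * K e a c - \<Gamma> b a e * K e b c - K b a e * \<Gamma> e b c - K b a e * K e b c))"
    by (simp add: sum.distrib[symmetric] algebra_simps)
  thus ?thesis using ricci_correction by (simp add: algebra_simps)
qed

lemma trace_G: "(\<Sum>a\<in>UNIV. \<Sum>c\<in>UNIV. Gi a c * G a c) = D"
proof -
  have "(\<Sum>a\<in>UNIV. \<Sum>c\<in>UNIV. Gi a c * G a c) = (\<Sum>a\<in>UNIV. kdelta (a::'n) a)"
    using GiG by (simp add: Gsym[of _ "_::'n"])
  thus ?thesis by (simp add: sum_kdelta_diag D_def)
qed

lemma u_sq_eq: "(\<Sum>a\<in>UNIV. \<Sum>c\<in>UNIV. Gi a c * (u a * u c)) = u_sq"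
  unfolding u_sq_def u_up_def by (simp add: sum_distrib_left algebra_simps)

lemma schouten_from_ricci:
  assumes D_ge_3: "D \<ge> 3"
    and R: "\<And>a c. R a c = k * G a c + (D - 2) * nabla_u a c - (D - 2) * (u a * u c)
      + G a c * (box_u + (D - 2) * u_sq)"
  shows "R a b / (D - 2) - G a b * (\<Sum>a\<in>UNIV. \<Sum>c\<in>UNIV. Gi a c * R a c) / (2 * (D - 1) * (D - 2))
     = nabla_u a b - u a * u b + G a b * (u_sq / 2 + k / (2 * (D - 1)))"
proof -
  have tr: "(\<Sum>a\<in>UNIV. \<Sum>c\<in>UNIV. Gi a c * R a c)
      = k * D + (D - 2) * box_u - (D - 2) * u_sq + D * (box_u + (D - 2) * u_sq)"
  proof -
    have "(\<Sum>a\<in>UNIV. \<Sum>c\<in>UNIV. Gi a c * R a c) =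
       k * (\<Sum>a\<in>UNIV. \<Sum>c\<in>UNIV. Gi a c * G a c) + (D - 2) * (\<Sum>a\<in>UNIV. \<Sum>c\<in>UNIV. Gi a c * nabla_u a c)
       - (D - 2) * (\<Sum>a\<in>UNIV. \<Sum>c\<in>UNIV. Gi a c * (u a * u c))
       + (\<Sum>a\<in>UNIV. \<Sum>c\<in>UNIV. Gi a c * G a c) * (box_u + (D - 2) * u_sq)"
      unfolding R by (simp add: sum.distrib sum_subtractf sum_distrib_left sum_distrib_right algebra_simps)
    thus ?thesis unfolding trace_G u_sq_eq box_u_def by simp
  qed
  have ne: "D - 2 \<noteq> 0" "D - 1 \<noteq> 0" using D_ge_3 by auto
  let ?S = "nabla_u a b - u a * u b + G a b * (u_sq / 2 + k / (2 * (D - 1)))"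
  have "R a b / (D - 2) - G a b * (\<Sum>a\<in>UNIV. \<Sum>c\<in>UNIV. Gi a c * R a c) / (2 * (D - 1) * (D - 2))
      = (R a b * (2 * (D - 1)) - G a b * (\<Sum>a\<in>UNIV. \<Sum>c\<in>UNIV. Gi a c * R a c)) / (2 * (D - 1) * (D - 2))"
    using ne by (simp add: diff_divide_distrib)
  also have "R a b * (2 * (D - 1)) - G a b * (\<Sum>a\<in>UNIV. \<Sum>c\<in>UNIV. Gi a c * R a c)
      = ?S * (2 * (D - 1) * (D - 2))"
    unfolding tr R[of a b] using ne by (simp add: field_simps)
  finally show ?thesis using ne by simp
qed

end

text \<open>\<open>d\<Gamma> r d s a\<close> and \<open>dH r s a\<close> stand for \<open>\<partial>\<^sub>r \<Gamma>\<^sup>d\<^sub>s\<^sub>a\<close> and \<open>\<partial>\<^sub>r \<partial>\<^sub>s u\<^sub>a\<close>, \<open>W\<close> for \<open>\<Omega>\<^sup>-\<^sup>2\<close>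
  and \<open>cst\<close> for \<open>\<lambda> / (2(D - 1))\<close>, where \<open>\<lambda>\<close> is the Einstein constant of \<open>\<Omega>\<^sup>-\<^sup>2 g\<close>. Then \<open>L\<close> is
  the Schouten tensor of \<open>g\<close> (see \<open>schouten_eq_L\<^sub>\<Omega>\<close> below).\<close>
locale conformal_jet2 = conformal_jet G Gi \<Gamma> u H
  for G Gi :: "'n::finite \<Rightarrow> 'n \<Rightarrow> real" and \<Gamma> :: "'n \<Rightarrow> 'n \<Rightarrow> 'n \<Rightarrow> real"
    and u :: "'n \<Rightarrow> real" and H :: "'n \<Rightarrow> 'n \<Rightarrow> real" +
  fixes d\<Gamma> :: "'n \<Rightarrow> 'n \<Rightarrow> 'n \<Rightarrow> 'n \<Rightarrow> real" and dH :: "'n \<Rightarrow> 'n \<Rightarrow> 'n \<Rightarrow> real"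
    and W cst :: real
  assumes dHsym: "dH r s a = dH s r a"
begin

definition "P = u_sq / 2 + cst * W"
definition "L s a = nabla_u s a - u s * u a + G s a * P"
definition "d_u_sq r = (\<Sum>e\<in>UNIV. H r e * u_up e + u e * (\<Sum>l\<in>UNIV. dGi r e l * u l + Gi e l * H r l))"
definition "dP r = d_u_sq r / 2 + cst * (2 * W * u r)"
definition "dL r s a = dH r s a - (\<Sum>e\<in>UNIV. d\<Gamma> r e s a * u e + \<Gamma> e s a * H r e)
   - (H r s * u a + u s * H r a) + dG r s a * P + G s a * dP r"
definition "nabla_L r s a = dL r s a - (\<Sum>k\<in>UNIV. \<Gamma> k r s * L k a + \<Gamma> k r a * L s k)"
definition "L_mixed s d = (\<Sum>e\<in>UNIV. L s e * Gi e d)"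
definition "riem_jet r s a d = d\<Gamma> s d r a - d\<Gamma> r d s a + (\<Sum>e\<in>UNIV. \<Gamma> d s e * \<Gamma> e r a - \<Gamma> d r e * \<Gamma> e s a)"
definition "weyl_jet r s a d = riem_jet r s a d - (L_mixed s d * G r a - L_mixed r d * G s a) - (kdelta s d * L r a - kdelta r d * L s a)"
definition "L_u r = (\<Sum>e\<in>UNIV. L r e * u_up e)"

lemma d_u_sq_eq: "d_u_sq r = 2 * (\<Sum>e\<in>UNIV. nabla_u r e * u_up e)"
proof -
  have "d_u_sq r = (\<Sum>e\<in>UNIV. H r e * u_up e) + (\<Sum>e\<in>UNIV. u e * (\<Sum>l\<in>UNIV. dGi r e l * u l))
     + (\<Sum>e\<in>UNIV. u e * (\<Sum>l\<in>UNIV. Gi e l * H r l))"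
    unfolding d_u_sq_def by (simp add: sum.distrib algebra_simps)
  also have "(\<Sum>e\<in>UNIV. u e * (\<Sum>l\<in>UNIV. Gi e l * H r l)) = (\<Sum>e\<in>UNIV. H r e * u_up e)"
    unfolding u_up_def sum_distrib_left by (subst sum.swap) (simp add: Gisym[of _ "_::'n"] mult_ac)
  also have "(\<Sum>e\<in>UNIV. u e * (\<Sum>l\<in>UNIV. dGi r e l * u l)) = - 2 * (\<Sum>e\<in>UNIV. (\<Sum>f\<in>UNIV. \<Gamma> f r e * u f) * u_up e)"
  proof -
    have "(\<Sum>e\<in>UNIV. u e * (\<Sum>l\<in>UNIV. dGi r e l * u l)) =
       - (\<Sum>e\<in>UNIV. u e * (\<Sum>m\<in>UNIV. \<Gamma> e r m * u_up m)) - (\<Sum>e\<in>UNIV. u e * (\<Sum>m\<in>UNIV. Gi e m * (\<Sum>f\<in>UNIV. \<Gamma> f r m * u f)))"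
      by (simp only: dGi_u) (simp add: algebra_simps sum_subtractf sum.distrib sum_negf)
    also have "(\<Sum>e\<in>UNIV. u e * (\<Sum>m\<in>UNIV. Gi e m * (\<Sum>f\<in>UNIV. \<Gamma> f r m * u f))) = (\<Sum>m\<in>UNIV. (\<Sum>f\<in>UNIV. \<Gamma> f r m * u f) * u_up m)"
      unfolding u_up_def sum_distrib_left sum_distrib_right by (subst sum.swap) (simp add: Gisym[of _ "_::'n"] mult_ac)
    also have "(\<Sum>e\<in>UNIV. u e * (\<Sum>m\<in>UNIV. \<Gamma> e r m * u_up m)) = (\<Sum>m\<in>UNIV. (\<Sum>f\<in>UNIV. \<Gamma> f r m * u f) * u_up m)"
      unfolding sum_distrib_left sum_distrib_right by (subst sum.swap) (simp add: mult_ac)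
    finally show ?thesis by simp
  qed
  finally show ?thesis unfolding nabla_u_def by (simp add: sum_subtractf algebra_simps)
qed

lemma L_u_eq: "L_u r = (\<Sum>e\<in>UNIV. nabla_u r e * u_up e) - u r * u_sq + u r * P"
proof -
  have "L_u r = (\<Sum>e\<in>UNIV. nabla_u r e * u_up e) - u r * (\<Sum>e\<in>UNIV. u e * u_up e) + P * (\<Sum>e\<in>UNIV. G r e * u_up e)"
    unfolding L_u_def L_def by (simp add: sum.distrib sum_subtractf sum_distrib_left algebra_simps)
  thus ?thesis by (simp add: lower_u_up u_sq_def)
qed

lemma dP_eq: "dP r = L_u r + u r * P"
  unfolding dP_def d_u_sq_eq L_u_eq P_def by (simp add: algebra_simps)

lemma L_mixed_u: "(\<Sum>d\<in>UNIV. L_mixed s d * u d) = L_u s"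
  unfolding L_mixed_def L_u_def u_up_def
  by (simp add: sum_distrib_left sum_distrib_right algebra_simps) (rule sum.swap)

definition "nabla_L_sym1 r s a = dH r s a - H r s * u a + P * (\<Sum>e\<in>UNIV. \<Gamma> e r s * G e a) - (\<Sum>k\<in>UNIV. \<Gamma> k r s * L k a)"
definition "nabla_L_sym2 r s a = - (\<Sum>e\<in>UNIV. \<Gamma> e s a * H r e) - (\<Sum>k\<in>UNIV. \<Gamma> k r a * H s k)"
definition "nabla_L_rest r s a = - (\<Sum>e\<in>UNIV. d\<Gamma> r e s a * u e) + (\<Sum>k\<in>UNIV. \<Sum>e\<in>UNIV. \<Gamma> k r a * \<Gamma> e s k * u e)
   - u s * nabla_u r a + G s a * dP r"

lemma nabla_L_split: "nabla_L r s a = nabla_L_sym1 r s a + nabla_L_sym2 r s a + nabla_L_rest r s a"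
  unfolding nabla_L_def dL_def nabla_L_sym1_def nabla_L_sym2_def nabla_L_rest_def dG_def L_def nabla_u_def
  by (simp add: sum.distrib sum_subtractf sum_distrib_left sum_distrib_right algebra_simps)

lemma nabla_L_sym1_sym: "nabla_L_sym1 r s a = nabla_L_sym1 s r a"
  unfolding nabla_L_sym1_def by (simp add: dHsym[of r s] Hsym[of r s] \<Gamma>sym[of _ r s])

lemma nabla_L_sym2_sym: "nabla_L_sym2 r s a = nabla_L_sym2 s r a"
  unfolding nabla_L_sym2_def by simp

lemma nabla_L_antisym: "nabla_L r s a - nabla_L s r a = (\<Sum>d\<in>UNIV. riem_jet r s a d * u d) - u s * nabla_u r a + u r * nabla_u s a
    + G s a * dP r - G r a * dP s"
proof -
  have e1: "(\<Sum>k\<in>UNIV. \<Sum>e\<in>UNIV. \<Gamma> k r a * \<Gamma> e s k * u e) = (\<Sum>d\<in>UNIV. \<Sum>e\<in>UNIV. \<Gamma> d s e * \<Gamma> e r a * u d)"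
    by (subst sum.swap) (simp add: mult_ac)
  have e2: "(\<Sum>k\<in>UNIV. \<Sum>e\<in>UNIV. \<Gamma> k s a * \<Gamma> e r k * u e) = (\<Sum>d\<in>UNIV. \<Sum>e\<in>UNIV. \<Gamma> d r e * \<Gamma> e s a * u d)"
    by (subst sum.swap) (simp add: mult_ac)
  have "nabla_L r s a - nabla_L s r a = nabla_L_rest r s a - nabla_L_rest s r a"
    unfolding nabla_L_split using nabla_L_sym1_sym nabla_L_sym2_sym by simp
  also have "\<dots> = (\<Sum>d\<in>UNIV. riem_jet r s a d * u d) - u s * nabla_u r a + u r * nabla_u s a
    + G s a * dP r - G r a * dP s"
    unfolding nabla_L_rest_def riem_jet_def e1 e2
    by (simp add: sum.distrib sum_subtractf sum_distrib_left sum_distrib_right algebra_simps)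
  finally show ?thesis .
qed

lemma alt_nabla_L_eq_weyl_jet: "(nabla_L r s a - nabla_L s r a) / 2 = (\<Sum>d\<in>UNIV. weyl_jet r s a d * (u d / 2))"
proof -
  have "(\<Sum>d\<in>UNIV. weyl_jet r s a d * u d) = (\<Sum>d\<in>UNIV. riem_jet r s a d * u d)
     - ((\<Sum>d\<in>UNIV. L_mixed s d * u d) * G r a - (\<Sum>d\<in>UNIV. L_mixed r d * u d) * G s a)
     - ((\<Sum>d\<in>UNIV. kdelta s d * (L r a * u d)) - (\<Sum>d\<in>UNIV. kdelta r d * (L s a * u d)))"
    unfolding weyl_jet_def by (simp add: sum.distrib sum_subtractf sum_distrib_left sum_distrib_right algebra_simps)
  also have "\<dots> = (\<Sum>d\<in>UNIV. riem_jet r s a d * u d)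
     - ((\<Sum>d\<in>UNIV. L_mixed s d * u d) * G r a - (\<Sum>d\<in>UNIV. L_mixed r d * u d) * G s a)
     - (L r a * u s - L s a * u r)" by (simp only: sum_kdelta_left)
  also have "\<dots> = nabla_L r s a - nabla_L s r a"
    unfolding L_mixed_u nabla_L_antisym dP_eq L_def by (simp add: algebra_simps)
  finally have "(\<Sum>d\<in>UNIV. weyl_jet r s a d * u d) = nabla_L r s a - nabla_L s r a" .
  hence "(nabla_L r s a - nabla_L s r a) / 2 = (\<Sum>d\<in>UNIV. weyl_jet r s a d * u d) / 2" by simp
  thus ?thesis by (simp add: sum_divide_distrib)
qed

end
locale conformally_einstein = metric_chart g U for g :: "real^'n::finite \<Rightarrow> real^'n^'n" and U +
  fixes \<Omega> :: "real^'n \<Rightarrow> real" and lam :: real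
  assumes smooth_\<Omega>: "smooth_on U \<Omega>" and \<Omega>_pos: "\<And>y. y \<in> U \<Longrightarrow> \<Omega> y > 0" and card_ge_3: "CARD('n) \<ge> 3"
    and einstein: "\<And>y a b. y \<in> U \<Longrightarrow> ricci (\<lambda>y. inverse ((\<Omega> y)\<^sup>2) *\<^sub>R g y) y a b
        = lam * (inverse ((\<Omega> y)\<^sup>2) *\<^sub>R g y) $ a $ b"
begin

definition "inv_\<Omega> y = inverse (\<Omega> y)"
definition "u\<^sub>\<Omega> y a = - pd a \<Omega> y * inv_\<Omega> y"
definition "H\<^sub>\<Omega> y b a = - pd b (pd a \<Omega>) y * inv_\<Omega> y + pd a \<Omega> y * pd b \<Omega> y * (inv_\<Omega> y * inv_\<Omega> y)"
definition "W y = inverse ((\<Omega> y)\<^sup>2)"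

lemma differentiable_\<Omega>: "y \<in> U \<Longrightarrow> \<Omega> differentiable (at y)"
  using smooth_on_differentiable[OF smooth_\<Omega>, of y "[]"] by simp
lemma differentiable_pd_\<Omega>: "y \<in> U \<Longrightarrow> pd a \<Omega> differentiable (at y)"
  using smooth_on_differentiable[OF smooth_\<Omega>, of y "[a]"] by simp
lemma differentiable_pd2_\<Omega>: "y \<in> U \<Longrightarrow> pd b (pd a \<Omega>) differentiable (at y)"
  using smooth_on_differentiable[OF smooth_\<Omega>, of y "[b, a]"] by simp
lemma \<Omega>_nonzero: "y \<in> U \<Longrightarrow> \<Omega> y \<noteq> 0" using \<Omega>_pos by force

lemma differentiable_inv_\<Omega>: "y \<in> U \<Longrightarrow> inv_\<Omega> differentiable (at y)"
  unfolding inv_\<Omega>_def using differentiable_inverse[OF differentiable_\<Omega> \<Omega>_nonzero] by simp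

lemma pd_inv_\<Omega>:
  assumes y: "y \<in> U"
  shows "pd r inv_\<Omega> y = - pd r \<Omega> y * (inv_\<Omega> y * inv_\<Omega> y)"
proof -
  have "pd r (\<lambda>z. inverse (\<Omega> z)) y = - pd r \<Omega> y / (\<Omega> y)^2" by (rule pd_inverse[OF differentiable_\<Omega>[OF y] \<Omega>_nonzero[OF y]])
  thus ?thesis unfolding inv_\<Omega>_def by (simp add: power2_eq_square field_simps)
qed

lemma differentiable_u\<^sub>\<Omega>: "y \<in> U \<Longrightarrow> (\<lambda>z. u\<^sub>\<Omega> z a) differentiable (at y)"
  unfolding u\<^sub>\<Omega>_def by (intro differentiable_rules differentiable_pd_\<Omega> differentiable_inv_\<Omega>)

lemma pd_u\<^sub>\<Omega>: "y \<in> U \<Longrightarrow> pd b (\<lambda>z. u\<^sub>\<Omega> z a) y = H\<^sub>\<Omega> y b a"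
  unfolding u\<^sub>\<Omega>_def H\<^sub>\<Omega>_def
  by (simp add: pd_mult pd_minus differentiable_rules differentiable_pd_\<Omega> differentiable_pd2_\<Omega> differentiable_inv_\<Omega> pd_inv_\<Omega> algebra_simps)

lemma pd2_\<Omega>_commute: "y \<in> U \<Longrightarrow> pd b (pd a \<Omega>) y = pd a (pd b \<Omega>) y"
  by (rule pd_commute[OF open_U _ smooth_\<Omega>])

lemma pd3_\<Omega>_commute: "y \<in> U \<Longrightarrow> pd r (pd s (pd a \<Omega>)) y = pd s (pd r (pd a \<Omega>)) y"
  by (rule pd_commute[OF open_U _ smooth_on_pd[OF smooth_\<Omega>]])

lemma H\<^sub>\<Omega>_sym: "y \<in> U \<Longrightarrow> H\<^sub>\<Omega> y b a = H\<^sub>\<Omega> y a b"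
  unfolding H\<^sub>\<Omega>_def using pd2_\<Omega>_commute[of y b a] by (simp add: algebra_simps)

lemma differentiable_H\<^sub>\<Omega>: "y \<in> U \<Longrightarrow> (\<lambda>z. H\<^sub>\<Omega> z b a) differentiable (at y)"
  unfolding H\<^sub>\<Omega>_def by (intro differentiable_rules differentiable_pd_\<Omega> differentiable_pd2_\<Omega> differentiable_inv_\<Omega>)

lemma pd_H\<^sub>\<Omega>_sym:
  assumes y: "y \<in> U"
  shows "pd r (\<lambda>z. H\<^sub>\<Omega> z s a) y = pd s (\<lambda>z. H\<^sub>\<Omega> z r a) y"
proof -
  have e: "pd r (\<lambda>z. H\<^sub>\<Omega> z s a) y = - (pd r (pd s (pd a \<Omega>)) y * inv_\<Omega> y + pd s (pd a \<Omega>) y * pd r inv_\<Omega> y)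
      + (pd r (pd a \<Omega>) y * pd s \<Omega> y + pd a \<Omega> y * pd r (pd s \<Omega>) y) * (inv_\<Omega> y * inv_\<Omega> y)
      + pd a \<Omega> y * pd s \<Omega> y * (pd r inv_\<Omega> y * inv_\<Omega> y + inv_\<Omega> y * pd r inv_\<Omega> y)" for r s
    unfolding H\<^sub>\<Omega>_def by (simp add: pd_add pd_diff pd_mult pd_minus differentiable_rules differentiable_pd_\<Omega> differentiable_pd2_\<Omega> differentiable_inv_\<Omega> y algebra_simps)
  show ?thesis unfolding e pd_inv_\<Omega>[OF y] pd3_\<Omega>_commute[OF y, of r s a] pd2_\<Omega>_commute[OF y, of r s]
    using pd2_\<Omega>_commute[OF y, of r a] pd2_\<Omega>_commute[OF y, of s a] by (simp add: algebra_simps)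
qed

lemma differentiable_W:
  assumes y: "y \<in> U"
  shows "W differentiable (at y)"
proof -
  have "(\<lambda>z. inv_\<Omega> z * inv_\<Omega> z) differentiable (at y)" by (intro differentiable_rules differentiable_inv_\<Omega> y)
  moreover have "W = (\<lambda>z. inv_\<Omega> z * inv_\<Omega> z)" by (rule ext) (simp add: W_def inv_\<Omega>_def power2_eq_square)
  ultimately show ?thesis by simp
qed

lemma pd_W:
  assumes y: "y \<in> U"
  shows "pd r W y = 2 * W y * u\<^sub>\<Omega> y r"
proof -
  have "W = (\<lambda>z. inv_\<Omega> z * inv_\<Omega> z)" by (rule ext) (simp add: W_def inv_\<Omega>_def power2_eq_square)
  hence "pd r W y = pd r inv_\<Omega> y * inv_\<Omega> y + inv_\<Omega> y * pd r inv_\<Omega> y" using pd_mult[OF differentiable_inv_\<Omega>[OF y] differentiable_inv_\<Omega>[OF y]] by simp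
  thus ?thesis unfolding pd_inv_\<Omega>[OF y] u\<^sub>\<Omega>_def W_def inv_\<Omega>_def by (simp add: power2_eq_square field_simps)
qed

abbreviation "g\<^sub>E \<equiv> (\<lambda>y. inverse ((\<Omega> y)\<^sup>2) *\<^sub>R g y)"

definition "K\<^sub>\<Omega> y d a c = kdelta d a * u\<^sub>\<Omega> y c + kdelta d c * u\<^sub>\<Omega> y a - g y $ a $ c * (\<Sum>e\<in>UNIV. ginv g y $ d $ e * u\<^sub>\<Omega> y e)"

lemma conformal_jet_at: assumes y: "y \<in> U" shows "conformal_jet (g_dd y) (g_uu y) (Chr y) (H\<^sub>\<Omega> y)"
proof unfold_locales
  fix a b c
  show "g_dd y a b = g_dd y b a" by (rule g_dd_sym[OF y])
  show "g_uu y a b = g_uu y b a" by (rule g_uu_sym[OF y])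
  show "(\<Sum>m\<in>UNIV. g_dd y a m * g_uu y m b) = kdelta a b" by (rule g_dd_g_uu[OF y])
  show "(\<Sum>m\<in>UNIV. g_uu y a m * g_dd y m b) = kdelta a b" by (rule g_uu_g_dd[OF y])
  show "Chr y c a b = Chr y c b a" by (rule christoffel_sym[OF y])
  show "H\<^sub>\<Omega> y a b = H\<^sub>\<Omega> y b a" by (rule H\<^sub>\<Omega>_sym[OF y])
qed

lemma ginv_g\<^sub>E:
  assumes y: "y \<in> U"
  shows "ginv g\<^sub>E y $ c $ d = (\<Omega> y)\<^sup>2 * g_uu y c d"
proof -
  have "inverse ((\<Omega> y)\<^sup>2) \<noteq> 0" using \<Omega>_nonzero[OF y] by simp
  hence "matrix_inv (g\<^sub>E y) = inverse (inverse ((\<Omega> y)\<^sup>2)) *\<^sub>R matrix_inv (g y)"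
    using matrix_inv_scaleR[OF det_g[OF y]] by blast
  thus ?thesis unfolding ginv_def g_uu_def by simp
qed

lemma pd_g\<^sub>E:
  assumes y: "y \<in> U"
  shows "pd a (\<lambda>z. g\<^sub>E z $ d $ b) y = 2 * W y * u\<^sub>\<Omega> y a * g_dd y d b + W y * pd_g a y d b"
proof -
  have "(\<lambda>z. g\<^sub>E z $ d $ b) = (\<lambda>z. W z * g z $ d $ b)" by (rule ext) (simp add: W_def)
  hence "pd a (\<lambda>z. g\<^sub>E z $ d $ b) y = pd a W y * g y $ d $ b + W y * pd a (\<lambda>z. g z $ d $ b) y"
    using pd_mult[OF differentiable_W[OF y] differentiable_g_entry[OF y]] by simp
  thus ?thesis unfolding pd_W[OF y] g_dd_def pd_g_def .
qed

lemma christoffel_g\<^sub>E: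
  assumes y: "y \<in> U"
  shows "christoffel g\<^sub>E y c a b = Chr y c a b + K\<^sub>\<Omega> y c a b"
proof -
  have \<Omega>W: "(\<Omega> y)\<^sup>2 * W y = 1" unfolding W_def using \<Omega>_nonzero[OF y] by simp
  have summand: "(\<Omega> y)\<^sup>2 * g_uu y c d * (pd a (\<lambda>z. g\<^sub>E z $ d $ b) y + pd b (\<lambda>z. g\<^sub>E z $ d $ a) y - pd d (\<lambda>z. g\<^sub>E z $ a $ b) y)
     = g_uu y c d * (pd_g a y d b + pd_g b y d a - pd_g d y a b)
       + 2 * (g_uu y c d * (u\<^sub>\<Omega> y a * g_dd y d b + u\<^sub>\<Omega> y b * g_dd y d a - u\<^sub>\<Omega> y d * g_dd y a b))" for d
  proof -
    have "(\<Omega> y)\<^sup>2 * g_uu y c d * (pd a (\<lambda>z. g\<^sub>E z $ d $ b) y + pd b (\<lambda>z. g\<^sub>E z $ d $ a) y - pd d (\<lambda>z. g\<^sub>E z $ a $ b) y)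
       = ((\<Omega> y)\<^sup>2 * W y) * (g_uu y c d * (pd_g a y d b + pd_g b y d a - pd_g d y a b)
       + 2 * (g_uu y c d * (u\<^sub>\<Omega> y a * g_dd y d b + u\<^sub>\<Omega> y b * g_dd y d a - u\<^sub>\<Omega> y d * g_dd y a b)))"
      unfolding pd_g\<^sub>E[OF y] using g_dd_sym[OF y, of a d] by (simp add: algebra_simps)
    thus ?thesis using \<Omega>W by simp
  qed
  have decomposed: "christoffel g\<^sub>E y c a b = (1/2) * (\<Sum>d\<in>UNIV. g_uu y c d * (pd_g a y d b + pd_g b y d a - pd_g d y a b))
      + (\<Sum>d\<in>UNIV. g_uu y c d * (u\<^sub>\<Omega> y a * g_dd y d b + u\<^sub>\<Omega> y b * g_dd y d a - u\<^sub>\<Omega> y d * g_dd y a b))"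
  proof -
    have "christoffel g\<^sub>E y c a b = (1/2) * ((\<Sum>d\<in>UNIV. g_uu y c d * (pd_g a y d b + pd_g b y d a - pd_g d y a b))
      + 2 * (\<Sum>d\<in>UNIV. g_uu y c d * (u\<^sub>\<Omega> y a * g_dd y d b + u\<^sub>\<Omega> y b * g_dd y d a - u\<^sub>\<Omega> y d * g_dd y a b)))"
      unfolding christoffel_def ginv_g\<^sub>E[OF y] summand by (simp only: sum.distrib sum_distrib_left[symmetric])
    thus ?thesis by (simp add: algebra_simps)
  qed
  have contract: "(\<Sum>d\<in>UNIV. g_uu y c d * (u\<^sub>\<Omega> y a * g_dd y d b + u\<^sub>\<Omega> y b * g_dd y d a - u\<^sub>\<Omega> y d * g_dd y a b))
     = u\<^sub>\<Omega> y a * kdelta c b + u\<^sub>\<Omega> y b * kdelta c a - g_dd y a b * (\<Sum>d\<in>UNIV. g_uu y c d * u\<^sub>\<Omega> y d)"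
  proof -
    have "(\<Sum>d\<in>UNIV. g_uu y c d * (u\<^sub>\<Omega> y a * g_dd y d b + u\<^sub>\<Omega> y b * g_dd y d a - u\<^sub>\<Omega> y d * g_dd y a b))
     = u\<^sub>\<Omega> y a * (\<Sum>d\<in>UNIV. g_uu y c d * g_dd y d b) + u\<^sub>\<Omega> y b * (\<Sum>d\<in>UNIV. g_uu y c d * g_dd y d a)
       - g_dd y a b * (\<Sum>d\<in>UNIV. g_uu y c d * u\<^sub>\<Omega> y d)"
      by (simp add: sum.distrib sum_subtractf sum_distrib_left algebra_simps)
    thus ?thesis using g_uu_g_dd[OF y] by simp
  qed
  show ?thesis unfolding decomposed contract christoffel_eq[symmetric] unfolding K\<^sub>\<Omega>_def g_dd_def g_uu_def by (simp add: algebra_simps)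
qed

lemma K\<^sub>\<Omega>_eq: "y \<in> U \<Longrightarrow> K\<^sub>\<Omega> y d a c = conformal_jet.K (g_dd y) (g_uu y) (u\<^sub>\<Omega> y) d a c"
  unfolding K\<^sub>\<Omega>_def conformal_jet.K_def[OF conformal_jet_at] conformal_jet.u_up_def[OF conformal_jet_at] g_dd_def g_uu_def by simp

lemma differentiable_K\<^sub>\<Omega>: "y \<in> U \<Longrightarrow> (\<lambda>z. K\<^sub>\<Omega> z d a c) differentiable (at y)"
  unfolding K\<^sub>\<Omega>_def
  by (intro differentiable_rules differentiable_sum ballI finite differentiable_u\<^sub>\<Omega> differentiable_g_entry differentiable_ginv_entry) auto

lemma pd_K\<^sub>\<Omega>: assumes y: "y \<in> U"
  shows "pd b (\<lambda>z. K\<^sub>\<Omega> z d a c) y = conformal_jet.dK (g_dd y) (g_uu y) (Chr y) (u\<^sub>\<Omega> y) (H\<^sub>\<Omega> y) b d a c"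
proof -
  have ds: "(\<lambda>z. \<Sum>e\<in>UNIV. ginv g z $ d $ e * u\<^sub>\<Omega> z e) differentiable (at y)"
    by (intro differentiable_rules differentiable_sum ballI finite differentiable_u\<^sub>\<Omega> differentiable_g_entry differentiable_ginv_entry y)
  have ps: "pd b (\<lambda>z. \<Sum>e\<in>UNIV. ginv g z $ d $ e * u\<^sub>\<Omega> z e) y
     = (\<Sum>e\<in>UNIV. pd b (\<lambda>z. ginv g z $ d $ e) y * u\<^sub>\<Omega> y e + g_uu y d e * H\<^sub>\<Omega> y b e)"
    by (subst pd_sum) (auto intro!: sum.cong differentiable_rules differentiable_u\<^sub>\<Omega> differentiable_ginv_entry y simp: pd_mult differentiable_u\<^sub>\<Omega> differentiable_ginv_entry y pd_u\<^sub>\<Omega> g_uu_def)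
  have "pd b (\<lambda>z. K\<^sub>\<Omega> z d a c) y = kdelta d a * H\<^sub>\<Omega> y b c + kdelta d c * H\<^sub>\<Omega> y b a
     - (pd_g b y a c * (\<Sum>e\<in>UNIV. g_uu y d e * u\<^sub>\<Omega> y e)
        + g_dd y a c * (\<Sum>e\<in>UNIV. pd b (\<lambda>z. ginv g z $ d $ e) y * u\<^sub>\<Omega> y e + g_uu y d e * H\<^sub>\<Omega> y b e))"
    unfolding K\<^sub>\<Omega>_def
    by (simp add: pd_add pd_diff pd_mult pd_const differentiable_rules differentiable_u\<^sub>\<Omega> differentiable_g_entry ds ps y pd_u\<^sub>\<Omega> pd_g_def g_dd_def g_uu_def)
  also have "\<dots> = conformal_jet.dK (g_dd y) (g_uu y) (Chr y) (u\<^sub>\<Omega> y) (H\<^sub>\<Omega> y) b d a c"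
    unfolding conformal_jet.dK_def[OF conformal_jet_at[OF y]] conformal_jet.dG_def[OF conformal_jet_at[OF y]] conformal_jet.dGi_def[OF conformal_jet_at[OF y]] conformal_jet.u_up_def[OF conformal_jet_at[OF y]]
      pd_g_christoffel[OF y] pd_ginv[OF y] by (simp add: algebra_simps)
  finally show ?thesis .
qed

lemma pd_christoffel_g\<^sub>E:
  assumes y: "y \<in> U"
  shows "pd b (\<lambda>z. christoffel g\<^sub>E z d a c) y
    = pd b (\<lambda>z. Chr z d a c) y + conformal_jet.dK (g_dd y) (g_uu y) (Chr y) (u\<^sub>\<Omega> y) (H\<^sub>\<Omega> y) b d a c"
proof -
  have "pd b (\<lambda>z. christoffel g\<^sub>E z d a c) y = pd b (\<lambda>z. Chr z d a c + K\<^sub>\<Omega> z d a c) y"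
    by (rule pd_cong_open[OF open_U y]) (simp add: christoffel_g\<^sub>E)
  also have "\<dots> = pd b (\<lambda>z. Chr z d a c) y + pd b (\<lambda>z. K\<^sub>\<Omega> z d a c) y"
    by (rule pd_add[OF differentiable_christoffel[OF y] differentiable_K\<^sub>\<Omega>[OF y]])
  finally show ?thesis using pd_K\<^sub>\<Omega>[OF y] by simp
qed

lemma ricci_g\<^sub>E:
  assumes y: "y \<in> U"
  shows "ricci g\<^sub>E y a c = ricci g y a c
    - (real CARD('n) - 2) * (conformal_jet.nabla_u (Chr y) (u\<^sub>\<Omega> y) (H\<^sub>\<Omega> y) a c - u\<^sub>\<Omega> y a * u\<^sub>\<Omega> y c)
    - g_dd y a c * (conformal_jet.box_u (g_uu y) (Chr y) (u\<^sub>\<Omega> y) (H\<^sub>\<Omega> y)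
        + (real CARD('n) - 2) * conformal_jet.u_sq (g_uu y) (u\<^sub>\<Omega> y))"
proof -
  let ?K = "conformal_jet.K (g_dd y) (g_uu y) (u\<^sub>\<Omega> y)"
  let ?dK = "conformal_jet.dK (g_dd y) (g_uu y) (Chr y) (u\<^sub>\<Omega> y) (H\<^sub>\<Omega> y)"
  have "ricci g\<^sub>E y a c = (\<Sum>b\<in>UNIV. (pd b (\<lambda>z. Chr z b a c) y + ?dK b b a c)
      - (pd a (\<lambda>z. Chr z b b c) y + ?dK a b b c)
      + (\<Sum>e\<in>UNIV. (Chr y b b e + ?K b b e) * (Chr y e a c + ?K e a c)
        - (Chr y b a e + ?K b a e) * (Chr y e b c + ?K e b c)))"
    unfolding ricci_def riem_def pd_christoffel_g\<^sub>E[OF y] christoffel_g\<^sub>E[OF y] K\<^sub>\<Omega>_eq[OF y] ..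
  also have "\<dots> = ricci g y a c
    - (real CARD('n) - 2) * (conformal_jet.nabla_u (Chr y) (u\<^sub>\<Omega> y) (H\<^sub>\<Omega> y) a c - u\<^sub>\<Omega> y a * u\<^sub>\<Omega> y c)
    - g_dd y a c * (conformal_jet.box_u (g_uu y) (Chr y) (u\<^sub>\<Omega> y) (H\<^sub>\<Omega> y)
        + (real CARD('n) - 2) * conformal_jet.u_sq (g_uu y) (u\<^sub>\<Omega> y))"
    unfolding conformal_jet.ricci_shift[OF conformal_jet_at[OF y], of "\<lambda>b d a c. pd b (\<lambda>z. Chr z d a c) y"]
    unfolding ricci_def riem_def by (simp add: conformal_jet.D_def[OF conformal_jet_at[OF y]] algebra_simps)
  finally show ?thesis .
qed

definition "cst = lam / (2 * (real CARD('n) - 1))"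

definition "L\<^sub>\<Omega> y s a = (H\<^sub>\<Omega> y s a - (\<Sum>e\<in>UNIV. Chr y e s a * u\<^sub>\<Omega> y e)) - u\<^sub>\<Omega> y s * u\<^sub>\<Omega> y a
   + g y $ s $ a * ((\<Sum>e\<in>UNIV. u\<^sub>\<Omega> y e * (\<Sum>l\<in>UNIV. ginv g y $ e $ l * u\<^sub>\<Omega> y l)) / 2 + cst * W y)"

lemma schouten_eq_L\<^sub>\<Omega>: assumes y: "y \<in> U" shows "schouten g y s a = L\<^sub>\<Omega> y s a"
proof -
  interpret jet: conformal_jet "g_dd y" "g_uu y" "Chr y" "u\<^sub>\<Omega> y" "H\<^sub>\<Omega> y" by (rule conformal_jet_at[OF y])
  have R: "ricci g y a c = lam * W y * g_dd y a c + (jet.D - 2) * jet.nabla_u a c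
      - (jet.D - 2) * (u\<^sub>\<Omega> y a * u\<^sub>\<Omega> y c) + g_dd y a c * (jet.box_u + (jet.D - 2) * jet.u_sq)" for a c
  proof -
    have "ricci g\<^sub>E y a c = lam * (W y * g_dd y a c)"
      using einstein[OF y, of a c] by (simp add: W_def g_dd_def)
    thus ?thesis using ricci_g\<^sub>E[OF y, of a c] by (simp add: jet.D_def algebra_simps)
  qed
  have D_ge_3: "3 \<le> jet.D" using card_ge_3 by (simp add: jet.D_def)
  have "ricci g y s a / (jet.D - 2) - g_dd y s a * (\<Sum>a\<in>UNIV. \<Sum>c\<in>UNIV. g_uu y a c * ricci g y a c) / (2 * (jet.D - 1) * (jet.D - 2))
     = jet.nabla_u s a - u\<^sub>\<Omega> y s * u\<^sub>\<Omega> y a + g_dd y s a * (jet.u_sq / 2 + lam * W y / (2 * (jet.D - 1)))"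
    by (rule jet.schouten_from_ricci[OF D_ge_3 R])
  thus ?thesis unfolding schouten_def scal_def L\<^sub>\<Omega>_def jet.nabla_u_def jet.u_sq_def jet.u_up_def cst_def
    by (simp add: jet.D_def g_dd_def g_uu_def)
qed

lemma differentiable_u_up: "y \<in> U \<Longrightarrow> (\<lambda>z. \<Sum>l\<in>UNIV. ginv g z $ e $ l * u\<^sub>\<Omega> z l) differentiable (at y)"
  by (intro differentiable_rules differentiable_sum ballI finite differentiable_u\<^sub>\<Omega> differentiable_ginv_entry) auto

lemma pd_u_up: "y \<in> U \<Longrightarrow> pd r (\<lambda>z. \<Sum>l\<in>UNIV. ginv g z $ e $ l * u\<^sub>\<Omega> z l) y
   = (\<Sum>l\<in>UNIV. pd r (\<lambda>z. ginv g z $ e $ l) y * u\<^sub>\<Omega> y l + g_uu y e l * H\<^sub>\<Omega> y r l)"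
  by (subst pd_sum) (auto intro!: sum.cong differentiable_rules differentiable_u\<^sub>\<Omega> differentiable_ginv_entry simp: pd_mult differentiable_u\<^sub>\<Omega> differentiable_ginv_entry pd_u\<^sub>\<Omega> g_uu_def)

lemma differentiable_u_sq: "y \<in> U \<Longrightarrow> (\<lambda>z. \<Sum>e\<in>UNIV. u\<^sub>\<Omega> z e * (\<Sum>l\<in>UNIV. ginv g z $ e $ l * u\<^sub>\<Omega> z l)) differentiable (at y)"
  by (intro differentiable_rules differentiable_sum ballI finite differentiable_u\<^sub>\<Omega> differentiable_u_up) auto

lemma pd_u_sq: "y \<in> U \<Longrightarrow> pd r (\<lambda>z. \<Sum>e\<in>UNIV. u\<^sub>\<Omega> z e * (\<Sum>l\<in>UNIV. ginv g z $ e $ l * u\<^sub>\<Omega> z l)) y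
   = (\<Sum>e\<in>UNIV. H\<^sub>\<Omega> y r e * (\<Sum>l\<in>UNIV. g_uu y e l * u\<^sub>\<Omega> y l)
        + u\<^sub>\<Omega> y e * (\<Sum>l\<in>UNIV. pd r (\<lambda>z. ginv g z $ e $ l) y * u\<^sub>\<Omega> y l + g_uu y e l * H\<^sub>\<Omega> y r l))"
  by (subst pd_sum) (auto intro!: sum.cong differentiable_rules differentiable_u\<^sub>\<Omega> differentiable_u_up simp: pd_mult differentiable_u\<^sub>\<Omega> differentiable_u_up pd_u_up pd_u\<^sub>\<Omega> g_uu_def)

lemma differentiable_\<Gamma>_u: "y \<in> U \<Longrightarrow> (\<lambda>z. \<Sum>e\<in>UNIV. Chr z e s a * u\<^sub>\<Omega> z e) differentiable (at y)"
  by (intro differentiable_rules differentiable_sum ballI finite differentiable_u\<^sub>\<Omega> differentiable_christoffel) auto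

lemma pd_\<Gamma>_u: "y \<in> U \<Longrightarrow> pd r (\<lambda>z. \<Sum>e\<in>UNIV. Chr z e s a * u\<^sub>\<Omega> z e) y
   = (\<Sum>e\<in>UNIV. pd r (\<lambda>z. Chr z e s a) y * u\<^sub>\<Omega> y e + Chr y e s a * H\<^sub>\<Omega> y r e)"
  by (subst pd_sum) (auto intro!: sum.cong differentiable_rules differentiable_u\<^sub>\<Omega> differentiable_christoffel simp: pd_mult differentiable_u\<^sub>\<Omega> differentiable_christoffel pd_u\<^sub>\<Omega>)

lemma conformal_jet2_at: assumes x: "x \<in> U" shows "conformal_jet2 (g_dd x) (g_uu x) (Chr x) (H\<^sub>\<Omega> x) (\<lambda>r s a. pd r (\<lambda>z. H\<^sub>\<Omega> z s a) x)"
proof -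
  interpret jet: conformal_jet "g_dd x" "g_uu x" "Chr x" "u\<^sub>\<Omega> x" "H\<^sub>\<Omega> x" by (rule conformal_jet_at[OF x])
  show ?thesis by unfold_locales (rule pd_H\<^sub>\<Omega>_sym[OF x])
qed

lemma pd_L\<^sub>\<Omega>: assumes x: "x \<in> U"
  shows "pd r (\<lambda>y. L\<^sub>\<Omega> y s a) x = conformal_jet2.dL (g_dd x) (g_uu x) (Chr x) (u\<^sub>\<Omega> x) (H\<^sub>\<Omega> x)
     (\<lambda>r d s a. pd r (\<lambda>z. Chr z d s a) x) (\<lambda>r s a. pd r (\<lambda>z. H\<^sub>\<Omega> z s a) x) (W x) cst r s a"
proof -
  interpret jet: conformal_jet2 "g_dd x" "g_uu x" "Chr x" "u\<^sub>\<Omega> x" "H\<^sub>\<Omega> x" "\<lambda>r d s a. pd r (\<lambda>z. Chr z d s a) x"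
    "\<lambda>r s a. pd r (\<lambda>z. H\<^sub>\<Omega> z s a) x" "W x" cst by (rule conformal_jet2_at[OF x])
  have "pd r (\<lambda>y. L\<^sub>\<Omega> y s a) x = (pd r (\<lambda>z. H\<^sub>\<Omega> z s a) x
      - (\<Sum>e\<in>UNIV. pd r (\<lambda>z. Chr z e s a) x * u\<^sub>\<Omega> x e + Chr x e s a * H\<^sub>\<Omega> x r e))
      - (H\<^sub>\<Omega> x r s * u\<^sub>\<Omega> x a + u\<^sub>\<Omega> x s * H\<^sub>\<Omega> x r a)
      + (pd_g r x s a * ((\<Sum>e\<in>UNIV. u\<^sub>\<Omega> x e * (\<Sum>l\<in>UNIV. g_uu x e l * u\<^sub>\<Omega> x l)) / 2 + cst * W x)
         + g_dd x s a * ((\<Sum>e\<in>UNIV. H\<^sub>\<Omega> x r e * (\<Sum>l\<in>UNIV. g_uu x e l * u\<^sub>\<Omega> x l)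
        + u\<^sub>\<Omega> x e * (\<Sum>l\<in>UNIV. pd r (\<lambda>z. ginv g z $ e $ l) x * u\<^sub>\<Omega> x l + g_uu x e l * H\<^sub>\<Omega> x r l)) / 2
         + cst * (2 * W x * u\<^sub>\<Omega> x r)))"
    unfolding L\<^sub>\<Omega>_def
    by (simp add: pd_add pd_diff pd_mult pd_const pd_divide_const differentiable_rules differentiable_H\<^sub>\<Omega> differentiable_\<Gamma>_u differentiable_u\<^sub>\<Omega> differentiable_g_entry differentiable_u_sq differentiable_W x
        pd_\<Gamma>_u pd_u_sq pd_u\<^sub>\<Omega> pd_W pd_g_def g_dd_def g_uu_def)
  also have "\<dots> = jet.dL r s a"
    unfolding jet.dL_def jet.dG_def jet.P_def jet.dP_def jet.d_u_sq_def jet.u_sq_def jet.u_up_def jet.dGi_def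
      pd_g_christoffel[OF x] pd_ginv[OF x] by (simp add: algebra_simps)
  finally show ?thesis .
qed

lemma weyl_eq_weyl_jet: assumes x: "x \<in> U"
  shows "weyl g x r s a d = conformal_jet2.weyl_jet (g_dd x) (g_uu x) (Chr x) (u\<^sub>\<Omega> x) (H\<^sub>\<Omega> x)
     (\<lambda>r d s a. pd r (\<lambda>z. Chr z d s a) x) (W x) cst r s a d"
proof -
  interpret jet: conformal_jet2 "g_dd x" "g_uu x" "Chr x" "u\<^sub>\<Omega> x" "H\<^sub>\<Omega> x" "\<lambda>r d s a. pd r (\<lambda>z. Chr z d s a) x"
    "\<lambda>r s a. pd r (\<lambda>z. H\<^sub>\<Omega> z s a) x" "W x" cst by (rule conformal_jet2_at[OF x])
  have L: "schouten g x s a = jet.L s a" for s a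
    unfolding schouten_eq_L\<^sub>\<Omega>[OF x] L\<^sub>\<Omega>_def jet.L_def jet.nabla_u_def jet.P_def jet.u_sq_def jet.u_up_def g_dd_def g_uu_def ..
  show ?thesis
    unfolding weyl_def jet.weyl_jet_def jet.riem_jet_def jet.L_mixed_def schouten_mixed_def riem_def L
    by (simp add: kdelta_def g_dd_def g_uu_def)
qed

lemma nabla_schouten_eq_nabla_L: assumes x: "x \<in> U"
  shows "nabla_schouten g x r s a = conformal_jet2.nabla_L (g_dd x) (g_uu x) (Chr x) (u\<^sub>\<Omega> x) (H\<^sub>\<Omega> x)
     (\<lambda>r d s a. pd r (\<lambda>z. Chr z d s a) x) (\<lambda>r s a. pd r (\<lambda>z. H\<^sub>\<Omega> z s a) x) (W x) cst r s a"
proof -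
  interpret jet: conformal_jet2 "g_dd x" "g_uu x" "Chr x" "u\<^sub>\<Omega> x" "H\<^sub>\<Omega> x" "\<lambda>r d s a. pd r (\<lambda>z. Chr z d s a) x"
    "\<lambda>r s a. pd r (\<lambda>z. H\<^sub>\<Omega> z s a) x" "W x" cst by (rule conformal_jet2_at[OF x])
  have L: "schouten g x s a = jet.L s a" for s a
    unfolding schouten_eq_L\<^sub>\<Omega>[OF x] L\<^sub>\<Omega>_def jet.L_def jet.nabla_u_def jet.P_def jet.u_sq_def jet.u_up_def g_dd_def g_uu_def ..
  have "pd r (\<lambda>y. schouten g y s a) x = pd r (\<lambda>y. L\<^sub>\<Omega> y s a) x"
    by (rule pd_cong_open[OF open_U x]) (rule schouten_eq_L\<^sub>\<Omega>)
  also have "\<dots> = jet.dL r s a" by (rule pd_L\<^sub>\<Omega>[OF x])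
  finally have D: "pd r (\<lambda>y. schouten g y s a) x = jet.dL r s a" .
  show ?thesis unfolding nabla_schouten_def jet.nabla_L_def D L ..
qed

lemma alt_nabla_schouten_eq_weyl: assumes x: "x \<in> U"
  shows "alt_nabla_schouten g x r s a = (\<Sum>d\<in>UNIV. weyl g x r s a d * (u\<^sub>\<Omega> x d / 2))"
proof -
  interpret jet: conformal_jet2 "g_dd x" "g_uu x" "Chr x" "u\<^sub>\<Omega> x" "H\<^sub>\<Omega> x" "\<lambda>r d s a. pd r (\<lambda>z. Chr z d s a) x"
    "\<lambda>r s a. pd r (\<lambda>z. H\<^sub>\<Omega> z s a) x" "W x" cst by (rule conformal_jet2_at[OF x])
  show ?thesis unfolding alt_nabla_schouten_def nabla_schouten_eq_nabla_L[OF x] weyl_eq_weyl_jet[OF x] by (rule jet.alt_nabla_L_eq_weyl_jet)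
qed

end

lemma sum_UNIV_prod: "(\<Sum>k\<in>(UNIV::('a::finite \<times> 'b::finite) set). f k) = (\<Sum>m\<in>UNIV. \<Sum>n\<in>UNIV. f (m, n))"
  by (simp add: sum.cartesian_product)

lemma sum_swap_pairs:
  "(\<Sum>u\<in>A. \<Sum>v\<in>B. \<Sum>m\<in>C. \<Sum>n\<in>D. f u v m n) = (\<Sum>m\<in>C. \<Sum>n\<in>D. \<Sum>u\<in>A. \<Sum>v\<in>B. f u v m n)"
proof -
  have "(\<Sum>u\<in>A. \<Sum>v\<in>B. \<Sum>m\<in>C. \<Sum>n\<in>D. f u v m n) = (\<Sum>u\<in>A. \<Sum>m\<in>C. \<Sum>v\<in>B. \<Sum>n\<in>D. f u v m n)"
    by (rule sum.cong[OF refl], rule sum.swap)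
  also have "\<dots> = (\<Sum>m\<in>C. \<Sum>u\<in>A. \<Sum>v\<in>B. \<Sum>n\<in>D. f u v m n)" by (rule sum.swap)
  also have "\<dots> = (\<Sum>m\<in>C. \<Sum>u\<in>A. \<Sum>n\<in>D. \<Sum>v\<in>B. f u v m n)"
    by (rule sum.cong[OF refl], rule sum.cong[OF refl], rule sum.swap)
  also have "\<dots> = (\<Sum>m\<in>C. \<Sum>n\<in>D. \<Sum>u\<in>A. \<Sum>v\<in>B. f u v m n)"
    by (rule sum.cong[OF refl], rule sum.swap)
  finally show ?thesis .
qed

lemma sum_swap_innermost:
  "(\<Sum>l\<in>A. \<Sum>p\<in>B. \<Sum>q\<in>C. \<Sum>d\<in>D. f l p q d) = (\<Sum>p\<in>B. \<Sum>q\<in>C. \<Sum>d\<in>D. \<Sum>l\<in>A. f l p q d)"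
proof -
  have "(\<Sum>l\<in>A. \<Sum>p\<in>B. \<Sum>q\<in>C. \<Sum>d\<in>D. f l p q d) = (\<Sum>p\<in>B. \<Sum>l\<in>A. \<Sum>q\<in>C. \<Sum>d\<in>D. f l p q d)"
    by (rule sum.swap)
  also have "\<dots> = (\<Sum>p\<in>B. \<Sum>q\<in>C. \<Sum>l\<in>A. \<Sum>d\<in>D. f l p q d)"
    by (rule sum.cong[OF refl], rule sum.swap)
  also have "\<dots> = (\<Sum>p\<in>B. \<Sum>q\<in>C. \<Sum>d\<in>D. \<Sum>l\<in>A. f l p q d)"
    by (rule sum.cong[OF refl], rule sum.cong[OF refl], rule sum.swap)
  finally show ?thesis .
qed

text \<open>\<open>M \<otimes> M\<close>, which moves both indices of a 2-tensor with \<open>M\<close>.\<close>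
definition kron2 :: "real^'n::finite^'m::finite \<Rightarrow> real^('n \<times> 'n)^('m \<times> 'm)" where
  "kron2 M = (\<chi> i k. M $ fst i $ fst k * M $ snd i $ snd k)"

lemma kron2_mult: "kron2 A ** kron2 B = kron2 (A ** B)"
proof -
  have "(kron2 A ** kron2 B) $ (i1, i2) $ (j1, j2) = kron2 (A ** B) $ (i1, i2) $ (j1, j2)" for i1 i2 j1 j2
  proof -
    have "(kron2 A ** kron2 B) $ (i1, i2) $ (j1, j2)
        = (\<Sum>m\<in>UNIV. \<Sum>n\<in>UNIV. (A $ i1 $ m * B $ m $ j1) * (A $ i2 $ n * B $ n $ j2))"
      unfolding matrix_matrix_mult_def kron2_def by (simp add: sum_UNIV_prod mult_ac)
    also have "\<dots> = kron2 (A ** B) $ (i1, i2) $ (j1, j2)"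
      unfolding kron2_def matrix_matrix_mult_def by (simp add: sum_product)
    finally show ?thesis .
  qed
  thus ?thesis by (simp add: vec_eq_iff)
qed

lemma kron2_mat_1: "kron2 (mat 1 :: real^'n::finite^'n) = mat 1"
  unfolding kron2_def mat_def by (auto simp: vec_eq_iff)

lemma MP_inverse_range_id: "(A ** MP_inverse A) *v (A *v y) = A *v (y :: real^'n::finite)"
  using is_MP_inverse_MP_inverse[of A]
  by (simp add: is_MP_inverse_def matrix_vector_mul_assoc)

context metric_chart
begin

lemma kron2_g_ginv: "x \<in> U \<Longrightarrow> kron2 (g x) ** kron2 (ginv g x) = mat 1"
  by (simp add: kron2_mult ginv_def matrix_inv_mult[OF det_g] kron2_mat_1)

lemma kron2_ginv_g: "x \<in> U \<Longrightarrow> kron2 (ginv g x) ** kron2 (g x) = mat 1"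
  by (simp add: kron2_mult ginv_def matrix_inv_mult[OF det_g] kron2_mat_1)

lemma weyl_dduu_matrix:
  "weyl_dduu g x b e q p = (kron2 (g x) ** weyl_endo g x ** kron2 (ginv g x)) $ (b, e) $ (q, p)"
proof -
  have "(kron2 (g x) ** weyl_endo g x ** kron2 (ginv g x)) $ (b, e) $ (q, p) =
     (\<Sum>u\<in>UNIV. \<Sum>v\<in>UNIV. \<Sum>m\<in>UNIV. \<Sum>n\<in>UNIV.
        g x $ b $ m * g x $ e $ n * weyl_uudd g x m n u v * ginv g x $ u $ q * ginv g x $ v $ p)"
    unfolding matrix_matrix_mult_def kron2_def weyl_endo_def
    by (simp add: sum_UNIV_prod sum_distrib_right sum_distrib_left mult_ac)
  also have "\<dots> = weyl_dduu g x b e q p"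
    unfolding weyl_dduu_def by (rule sum_swap_pairs)
  finally show ?thesis ..
qed

lemma pinv_dduu_matrix:
  "pinv_dduu g x q p r s = (kron2 (g x) ** MP_inverse (weyl_endo g x) ** kron2 (ginv g x)) $ (q, p) $ (r, s)"
proof -
  have "(kron2 (g x) ** MP_inverse (weyl_endo g x) ** kron2 (ginv g x)) $ (q, p) $ (r, s) =
     (\<Sum>u\<in>UNIV. \<Sum>v\<in>UNIV. \<Sum>m\<in>UNIV. \<Sum>n\<in>UNIV. g x $ q $ m * g x $ p $ n
        * MP_inverse (weyl_endo g x) $ (m, n) $ (u, v) * ginv g x $ u $ r * ginv g x $ v $ s)"
    unfolding matrix_matrix_mult_def kron2_def
    by (simp add: sum_UNIV_prod sum_distrib_right sum_distrib_left mult_ac)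
  also have "\<dots> = pinv_dduu g x q p r s"
    unfolding pinv_dduu_def by (rule sum_swap_pairs)
  finally show ?thesis ..
qed

lemma g_dd_raise:
  assumes x: "x \<in> U"
  shows "(\<Sum>l\<in>UNIV. g_dd x d' l * (\<Sum>d\<in>UNIV. g_uu x l d * w d)) = w d'"
proof -
  have "(\<Sum>l\<in>UNIV. g_dd x d' l * (\<Sum>d\<in>UNIV. g_uu x l d * w d))
      = (\<Sum>d\<in>UNIV. (\<Sum>l\<in>UNIV. g_dd x d' l * g_uu x l d) * w d)"
    unfolding sum_distrib_left sum_distrib_right by (subst sum.swap) (simp add: mult_ac)
  thus ?thesis using g_dd_g_uu[OF x] by simp
qed

text \<open>With both indices raised, \<open>X\<^sub>r\<^sub>s = C\<^sub>r\<^sub>s\<^sub>a\<^sup>d w\<^sub>d\<close> is the image under the Weyl endomorphism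
  of \<open>\<psi>\<^sup>k\<^sup>l = \<delta>\<^sup>k\<^sub>a w\<^sup>l\<close>.\<close>
lemma kron2_ginv_weyl_contraction:
  assumes x: "x \<in> U" and X: "\<And>r s. X r s = (\<Sum>d\<in>UNIV. weyl g x r s a d * w d)"
  shows "kron2 (ginv g x) *v (\<chi> rs. X (fst rs) (snd rs)) =
    weyl_endo g x *v (\<chi> kl. kdelta (fst kl) a * (\<Sum>d\<in>UNIV. g_uu x (snd kl) d * w d))"
proof -
  define V where "V l = (\<Sum>d\<in>UNIV. g_uu x l d * w d)" for l
  have "(weyl_endo g x *v (\<chi> kl. kdelta (fst kl) a * V (snd kl))) $ (u, v)
      = (kron2 (ginv g x) *v (\<chi> rs. X (fst rs) (snd rs))) $ (u, v)" for u v
  proof -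
    have "(weyl_endo g x *v (\<chi> kl. kdelta (fst kl) a * V (snd kl))) $ (u, v)
       = (\<Sum>k\<in>UNIV. \<Sum>l\<in>UNIV. kdelta k a * (weyl_uudd g x u v k l * V l))"
      unfolding matrix_vector_mult_def weyl_endo_def by (simp add: sum_UNIV_prod mult_ac)
    also have "\<dots> = (\<Sum>l\<in>UNIV. weyl_uudd g x u v a l * V l)"
      by (subst sum.swap) simp
    also have "\<dots> = (\<Sum>l\<in>UNIV. \<Sum>p\<in>UNIV. \<Sum>q\<in>UNIV. \<Sum>d\<in>UNIV.
          g_uu x u p * g_uu x v q * weyl g x p q a d * (g_dd x d l * V l))"
      unfolding weyl_uudd_def g_uu_def g_dd_def by (simp add: sum_distrib_right sum_distrib_left mult_ac)
    also have "\<dots> = (\<Sum>p\<in>UNIV. \<Sum>q\<in>UNIV. \<Sum>d\<in>UNIV. \<Sum>l\<in>UNIV.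
          g_uu x u p * g_uu x v q * weyl g x p q a d * (g_dd x d l * V l))"
      by (rule sum_swap_innermost)
    also have "\<dots> = (\<Sum>p\<in>UNIV. \<Sum>q\<in>UNIV. g_uu x u p * g_uu x v q * (\<Sum>d\<in>UNIV. weyl g x p q a d * w d))"
      using g_dd_raise[OF x] unfolding V_def by (simp add: sum_distrib_left[symmetric] mult.assoc)
    also have "\<dots> = (kron2 (ginv g x) *v (\<chi> rs. X (fst rs) (snd rs))) $ (u, v)"
      unfolding matrix_vector_mult_def kron2_def X g_uu_def by (simp add: sum_UNIV_prod)
    finally show ?thesis .
  qed
  thus ?thesis unfolding V_def by (simp add: vec_eq_iff)
qed

lemma weyl_pinv_contraction_matrix:
  "(\<Sum>q\<in>UNIV. \<Sum>p\<in>UNIV. \<Sum>r\<in>UNIV. \<Sum>s\<in>UNIV.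
      weyl_dduu g x b e q p * pinv_dduu g x q p r s * X r s)
    = ((kron2 (g x) ** weyl_endo g x ** kron2 (ginv g x)) ** (kron2 (g x) ** MP_inverse (weyl_endo g x)
        ** kron2 (ginv g x)) *v (\<chi> rs. X (fst rs) (snd rs))) $ (b, e)"
proof -
  define M1 where "M1 = kron2 (g x) ** weyl_endo g x ** kron2 (ginv g x)"
  define M2 where "M2 = kron2 (g x) ** MP_inverse (weyl_endo g x) ** kron2 (ginv g x)"
  have "(\<Sum>q\<in>UNIV. \<Sum>p\<in>UNIV. \<Sum>r\<in>UNIV. \<Sum>s\<in>UNIV.
      weyl_dduu g x b e q p * pinv_dduu g x q p r s * X r s)
    = (\<Sum>r\<in>UNIV. \<Sum>s\<in>UNIV. \<Sum>q\<in>UNIV. \<Sum>p\<in>UNIV. M1 $ (b, e) $ (q, p) * M2 $ (q, p) $ (r, s) * X r s)"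
    unfolding M1_def M2_def weyl_dduu_matrix pinv_dduu_matrix by (rule sum_swap_pairs)
  also have "\<dots> = ((M1 ** M2) *v (\<chi> rs. X (fst rs) (snd rs))) $ (b, e)"
    unfolding matrix_vector_mult_def matrix_matrix_mult_def
    by (simp add: sum_UNIV_prod sum_distrib_right)
  finally show ?thesis unfolding M1_def M2_def .
qed

lemma weyl_pinv_weyl_contraction:
  assumes x: "x \<in> U" and X: "\<And>r s. X r s = (\<Sum>d\<in>UNIV. weyl g x r s a d * w d)"
  shows "(\<Sum>q\<in>UNIV. \<Sum>p\<in>UNIV. \<Sum>r\<in>UNIV. \<Sum>s\<in>UNIV.
        weyl_dduu g x b e q p * pinv_dduu g x q p r s * X r s) = X b e"
proof -
  define A where "A = weyl_endo g x"
  define Xv where "Xv = (\<chi> rs. X (fst rs) (snd rs))"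
  obtain \<psi> where \<psi>: "kron2 (ginv g x) *v Xv = A *v \<psi>"
    using kron2_ginv_weyl_contraction[OF x X] unfolding A_def Xv_def by blast
  have "(kron2 (g x) ** A ** kron2 (ginv g x)) ** (kron2 (g x) ** MP_inverse A ** kron2 (ginv g x))
      = (kron2 (g x) ** A) ** (kron2 (ginv g x) ** kron2 (g x)) ** (MP_inverse A ** kron2 (ginv g x))"
    by (simp add: matrix_mul_assoc)
  also have "\<dots> = kron2 (g x) ** (A ** MP_inverse A) ** kron2 (ginv g x)"
    using kron2_ginv_g[OF x] by (simp add: matrix_mul_assoc)
  finally have "(kron2 (g x) ** A ** kron2 (ginv g x)) ** (kron2 (g x) ** MP_inverse A ** kron2 (ginv g x))
      = kron2 (g x) ** (A ** MP_inverse A) ** kron2 (ginv g x)" .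
  hence "(kron2 (g x) ** A ** kron2 (ginv g x)) ** (kron2 (g x) ** MP_inverse A ** kron2 (ginv g x)) *v Xv
      = kron2 (g x) *v ((A ** MP_inverse A) *v (A *v \<psi>))"
    by (simp add: matrix_vector_mul_assoc[symmetric] \<psi>)
  also have "\<dots> = kron2 (g x) *v (kron2 (ginv g x) *v Xv)"
    by (simp only: MP_inverse_range_id \<psi>)
  also have "\<dots> = Xv"
    using kron2_g_ginv[OF x] by (simp add: matrix_vector_mul_assoc)
  finally show ?thesis
    unfolding weyl_pinv_contraction_matrix A_def[symmetric] Xv_def[symmetric] by (simp add: Xv_def)
qed

end

theorem proposition2:
  fixes g :: "real^'n::finite \<Rightarrow> real^'n^'n" and \<Omega> :: "real^'n \<Rightarrow> real"
    and U :: "(real^'n) set"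
  assumes "CARD('n) \<ge> 3"
    and "metric_on U g"
    and "\<forall>x\<in>U. \<not> weyl_invertible g x"
    and "smooth_on U \<Omega>"
    and "\<forall>x\<in>U. \<Omega> x > 0"
    and "einstein_on U (\<lambda>y. inverse ((\<Omega> y)\<^sup>2) *\<^sub>R g y)"
  shows "\<forall>x\<in>U. \<forall>a b e.
    (\<Sum>q\<in>UNIV. \<Sum>p\<in>UNIV. \<Sum>r\<in>UNIV. \<Sum>s\<in>UNIV.
        weyl_dduu g x b e q p * pinv_dduu g x q p r s * alt_nabla_schouten g x r s a)
    = alt_nabla_schouten g x b e a"
proof (intro ballI allI)
  fix x a b e
  assume x: "x \<in> U"
  obtain lam where "\<forall>x\<in>U. \<forall>a b. ricci (\<lambda>y. inverse ((\<Omega> y)\<^sup>2) *\<^sub>R g y) x a b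
      = lam * ((\<lambda>y. inverse ((\<Omega> y)\<^sup>2) *\<^sub>R g y) x) $ a $ b"
    using assms(6) unfolding einstein_on_def by blast
  then interpret conformally_einstein g U \<Omega> lam
    using assms(1,2,4,5) by unfold_locales auto
  show "(\<Sum>q\<in>UNIV. \<Sum>p\<in>UNIV. \<Sum>r\<in>UNIV. \<Sum>s\<in>UNIV.
        weyl_dduu g x b e q p * pinv_dduu g x q p r s * alt_nabla_schouten g x r s a)
    = alt_nabla_schouten g x b e a"
    by (rule weyl_pinv_weyl_contraction[OF x alt_nabla_schouten_eq_weyl[OF x]])
qed

end
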